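(* Let $u\in\mathcal M(N)_{\rm gen}$. Then $K_u^2$ restricted to $\mathrm{Ran}\,H_u$ has trivial kernel, and its eigenvalues on $\mathrm{Ran}\,H_u$ are exactly the $N$ solutions $\sigma=\mu_1^2>\dots>\mu_N^2$ of $$\sum_{j=1}^N\frac{\lambda_j^2\nu_j^2}{\lambda_j^2-\sigma}=1,$$ which satisfy $\lambda_1^2>\mu_1^2>\lambda_2^2>\mu_2^2>\dots>\lambda_N^2>\mu_N^2>0$; they are simple, with eigenvectors $g_m=(H_u^2-\mu_m^2I)^{-1}(u)$, and $(g_1,\dots,g_N)$ is an orthogonal basis of $\mathrm{Ran}\,H_u$ satisfying $(u|g_m)=1$ and $K_u(g_m)=\mu_me^{-i\theta_m}g_m$. Moreover the compressed shift acts by $$S(g_m)=\mu_me^{i\theta_m}h_m,\qquad h_m:=(H_u^2-\mu_m^2I)^{-1}P_u(1).$$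
   Context: $L^2_+$ is the Hardy space of the circle, $(u|v)=\int u\bar v\frac{d\theta}{2\pi}$, $\Pi$ the Szegő projector. $H_u(h)=\Pi(u\bar h)$ (antilinear Hankel operator), $T_z$ multiplication by $z$, $K_u=H_uT_z$, so $K_u^2=H_u^2-(\cdot|u)u$. $P_u$ is the orthogonal projector onto the closure of $\mathrm{Ran}\,H_u$, and $S:=P_uT_z$, viewed as an operator from $\overline{\mathrm{Ran}\,H_u}$ into itself (compressed shift). $\mathcal M(N)$: rational $u=A/B$, $A\in\mathbb C_{N-1}[z]$, $B\in\mathbb C_N[z]$, $B(0)=1$, $\deg A=N-1$ or $\deg B=N$, coprime, $B\ne0$ on $|z|\le1$. $\mathcal M(N)_{\rm gen}$: $u\in\mathcal M(N)$ with $1\notin\mathrm{Ran}H_u$ and $H_u^{2k}(1)$, $k=1..N$, independent; equivalently $H_u^2$ has $N$ simple positive eigenvalues $\lambda_1^2>\dots>\lambda_N^2$ and $\nu_j:=\|P_j(1)\|>0$, $\sum\nu_j^2<1$ ($P_j$ eigenprojectors). If $(f_m)$ is an orthonormal basis of $\mathrm{Ran}H_u$ with $K_uf_m=\mu_mf_m$, $\mu_m>0$, then $\theta_m:=\arg(u|f_m)^2$. *)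

theory Defs
  imports Complex_Main "HOL-Computational_Algebra.Polynomial" "HOL-Computational_Algebra.Polynomial_FPS"
begin

text \<open>Elements of the Hardy space L^2_+ of the circle are represented by their
 sequences of Fourier coefficients (index n = coefficient of z^n), i.e. by
 square-summable sequences nat => complex.\<close>

definition l2 :: "(nat \<Rightarrow> complex) \<Rightarrow> bool" where
  "l2 f \<longleftrightarrow> summable (\<lambda>n. (cmod (f n))^2)"

definition H2 :: "(nat \<Rightarrow> complex) set" where
  "H2 = {f. l2 f}"

text \<open>(u|v) = integral of u conj(v) d theta / 2 pi = sum of coefficients u_n conj(v_n)\<close>
definition hinner :: "(nat \<Rightarrow> complex) \<Rightarrow> (nat \<Rightarrow> complex) \<Rightarrow> complex" where
  "hinner f g = (\<Sum>n. f n * cnj (g n))"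

definition hnorm :: "(nat \<Rightarrow> complex) \<Rightarrow> real" where
  "hnorm f = sqrt (\<Sum>n. (cmod (f n))^2)"

text \<open>Hankel operator H_u(h) = Pi(u conj h): the k-th coefficient is sum_n u_(n+k) conj(h_n).\<close>
definition hankel :: "(nat \<Rightarrow> complex) \<Rightarrow> (nat \<Rightarrow> complex) \<Rightarrow> (nat \<Rightarrow> complex)" where
  "hankel u h = (\<lambda>k. \<Sum>n. u (n + k) * cnj (h n))"

definition shiftz :: "(nat \<Rightarrow> complex) \<Rightarrow> (nat \<Rightarrow> complex)" where
  "shiftz h = (\<lambda>n. if n = 0 then 0 else h (n - 1))"

definition Kop :: "(nat \<Rightarrow> complex) \<Rightarrow> (nat \<Rightarrow> complex) \<Rightarrow> (nat \<Rightarrow> complex)" where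
  "Kop u h = hankel u (shiftz h)"

definition one_h :: "nat \<Rightarrow> complex" where
  "one_h = (\<lambda>n. if n = 0 then 1 else 0)"

definition ranH :: "(nat \<Rightarrow> complex) \<Rightarrow> (nat \<Rightarrow> complex) set" where
  "ranH u = hankel u ` H2"

definition hclosure :: "(nat \<Rightarrow> complex) set \<Rightarrow> (nat \<Rightarrow> complex) set" where
  "hclosure W = {f \<in> H2. \<forall>e>0. \<exists>w\<in>W. hnorm (\<lambda>n. f n - w n) < e}"

definition proj :: "(nat \<Rightarrow> complex) set \<Rightarrow> (nat \<Rightarrow> complex) \<Rightarrow> (nat \<Rightarrow> complex)" where
  "proj W x = (THE v. v \<in> W \<and> (\<forall>w\<in>W. hinner (\<lambda>n. x n - v n) w = 0))"

definition Pu :: "(nat \<Rightarrow> complex) \<Rightarrow> (nat \<Rightarrow> complex) \<Rightarrow> (nat \<Rightarrow> complex)" where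
  "Pu u = proj (hclosure (ranH u))"

definition Sop :: "(nat \<Rightarrow> complex) \<Rightarrow> (nat \<Rightarrow> complex) \<Rightarrow> (nat \<Rightarrow> complex)" where
  "Sop u x = Pu u (shiftz x)"

definition resolv :: "(nat \<Rightarrow> complex) \<Rightarrow> real \<Rightarrow> (nat \<Rightarrow> complex) \<Rightarrow> (nat \<Rightarrow> complex)" where
  "resolv u s v = (THE h. h \<in> H2 \<and> (\<lambda>n. hankel u (hankel u h) n - of_real s * h n) = v)"

definition eigsp :: "(nat \<Rightarrow> complex) \<Rightarrow> real \<Rightarrow> (nat \<Rightarrow> complex) set" where
  "eigsp u s = {h \<in> H2. hankel u (hankel u h) = (\<lambda>n. of_real s * h n)}"

definition nu :: "(nat \<Rightarrow> complex) \<Rightarrow> (nat \<Rightarrow> real) \<Rightarrow> nat \<Rightarrow> real" where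
  "nu u lam j = hnorm (proj (eigsp u ((lam j)^2)) one_h)"

text \<open>M(N): u = A/B rational, as power series (Taylor coefficients of u on the disc).\<close>
definition in_M :: "nat \<Rightarrow> (nat \<Rightarrow> complex) \<Rightarrow> bool" where
  "in_M N u \<longleftrightarrow> N \<ge> 1 \<and> (\<exists>A B :: complex poly.
      A \<noteq> 0 \<and> degree A \<le> N - 1 \<and> degree B \<le> N \<and> poly B 0 = 1 \<and>
      (degree A = N - 1 \<or> degree B = N) \<and> coprime A B \<and>
      (\<forall>z. cmod z \<le> 1 \<longrightarrow> poly B z \<noteq> 0) \<and>
      fps_of_poly B * Abs_fps u = fps_of_poly A)"

definition H2pow :: "(nat \<Rightarrow> complex) \<Rightarrow> nat \<Rightarrow> (nat \<Rightarrow> complex) \<Rightarrow> (nat \<Rightarrow> complex)" where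
  "H2pow u k = ((\<lambda>h. hankel u (hankel u h)) ^^ k)"

definition in_Mgen :: "nat \<Rightarrow> (nat \<Rightarrow> complex) \<Rightarrow> bool" where
  "in_Mgen N u \<longleftrightarrow> in_M N u \<and> one_h \<notin> ranH u \<and>
     (\<forall>c :: nat \<Rightarrow> complex. (\<lambda>n. \<Sum>k=1..N. c k * H2pow u k one_h n) = (\<lambda>n. 0)
        \<longrightarrow> (\<forall>k\<in>{1..N}. c k = 0))"

definition K_onb :: "nat \<Rightarrow> (nat \<Rightarrow> complex) \<Rightarrow> (nat \<Rightarrow> real) \<Rightarrow> (nat \<Rightarrow> nat \<Rightarrow> complex) \<Rightarrow> bool" where
  "K_onb N u mu f \<longleftrightarrow>
     (\<forall>m\<in>{1..N}. f m \<in> ranH u \<and> Kop u (f m) = (\<lambda>n. of_real (mu m) * f m n)) \<and>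
     (\<forall>m\<in>{1..N}. \<forall>k\<in>{1..N}. hinner (f m) (f k) = (if m = k then 1 else 0)) \<and>
     (\<forall>h\<in>ranH u. \<exists>c. h = (\<lambda>n. \<Sum>m=1..N. c m * f m n))"

end

theory Submission
  imports Defs "HOL-Analysis.Analysis" "HOL-Computational_Algebra.Fundamental_Theorem_Algebra"
    "HOL-Library.Function_Algebras"
begin

(* Since u = A/B with B zero-free
   on the closed disc, the coefficients of u decay geometrically, and Ran H_u lies in the
   space V of sequences v with B*v a polynomial of degree < N; V is spanned by N fixed
   sequences, so it has dimension at most N.

   The hypothesis provides N distinct positive eigenvalues lambda_j^2 of H_u^2; normalised
   eigenvectors e_j lie in Ran H_u and are orthonormal, hence (dimension count) an
   orthonormal basis of Ran H_u.  Therefore Ran H_u is closed, P_u is the Fourier expansion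
   in (e_j), nu_j = |(1|e_j)|, and H_u^2 is diagonal in these coordinates.  The generic
   hypothesis gives (1|e_j) <> 0 (Vandermonde argument) and sum nu_j^2 < 1 (since 1 is not
   in Ran H_u).

   K_u^2 is a rank-one perturbation of the diagonal operator H_u^2.  An eigenvector for
   sigma must be a multiple of g = sum_j a_j/(lambda_j^2 - sigma) e_j (a_j = (u|e_j)), where
   sigma is a root of the secular equation sum_j lambda_j^2 nu_j^2/(lambda_j^2 - s) = 1.
   A monotonicity and intermediate-value study of this secular function (locale secular)
   shows it has exactly N roots, interlaced with the lambda_j^2.  Everything else --
   orthogonality of the g_m, (u|g_m) = 1, K_u g_m and S g_m -- follows from the explicit
   coordinates. *)

section \<open>Square-summable sequences\<close>

lemma l2_bounded: "l2 f \<Longrightarrow> \<exists>C\<ge>0. \<forall>n. cmod (f n) \<le> C"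
proof -
  assume f: "l2 f"
  have "cmod (f n) \<le> sqrt (\<Sum>n. (cmod (f n))^2)" for n
  proof -
    have "sum (\<lambda>n. (cmod (f n))^2) {n} \<le> (\<Sum>n. (cmod (f n))^2)"
      using f unfolding l2_def by (intro sum_le_suminf) auto
    thus ?thesis by (simp add: real_le_rsqrt)
  qed
  thus ?thesis by (metis norm_ge_zero order_trans)
qed

lemma l2_add: "l2 f \<Longrightarrow> l2 g \<Longrightarrow> l2 (\<lambda>n. f n + g n)"
  unfolding l2_def
proof -
  assume a: "summable (\<lambda>n. (cmod (f n))\<^sup>2)" "summable (\<lambda>n. (cmod (g n))\<^sup>2)"
  have "norm ((cmod (f n + g n))\<^sup>2) \<le> 2 * (cmod (f n))\<^sup>2 + 2 * (cmod (g n))\<^sup>2" for n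
  proof -
    have "cmod (f n + g n) \<le> cmod (f n) + cmod (g n)" by (rule norm_triangle_ineq)
    hence "(cmod (f n + g n))\<^sup>2 \<le> (cmod (f n) + cmod (g n))\<^sup>2"
      by (intro power_mono) auto
    also have "\<dots> \<le> 2 * (cmod (f n))\<^sup>2 + 2 * (cmod (g n))\<^sup>2"
      by (smt (verit) sum_squares_bound power2_sum)
    finally show ?thesis by simp
  qed
  moreover have "summable (\<lambda>n. 2 * (cmod (f n))\<^sup>2 + 2 * (cmod (g n))\<^sup>2)"
    using a by (intro summable_add summable_mult) auto
  ultimately show "summable (\<lambda>n. (cmod (f n + g n))\<^sup>2)"
    by (meson summable_comparison_test')
qed

lemma l2_scale: "l2 f \<Longrightarrow> l2 (\<lambda>n. c * f n)"
  unfolding l2_def by (simp add: norm_mult power_mult_distrib summable_mult)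

lemma l2_zero: "l2 (\<lambda>n. 0)" unfolding l2_def by simp

lemma l2_diff: "l2 f \<Longrightarrow> l2 g \<Longrightarrow> l2 (\<lambda>n. f n - g n)"
  using l2_add[OF _ l2_scale[of g "-1"], of f] by simp

lemma l2_sum: "finite S \<Longrightarrow> (\<And>i. i \<in> S \<Longrightarrow> l2 (f i)) \<Longrightarrow> l2 (\<lambda>n. \<Sum>i\<in>S. c i * f i n)"
proof (induction S rule: finite_induct)
  case empty then show ?case by (simp add: l2_zero)
next
  case (insert x F)
  then show ?case using l2_add[OF l2_scale[of "f x" "c x"], of "\<lambda>n. \<Sum>i\<in>F. c i * f i n"] by simp
qed

lemma l2_one: "l2 one_h"
proof -
  have "(\<lambda>n. (cmod (one_h n))^2) = (\<lambda>n. if n \<in> {0} then 1 else 0)"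
    by (auto simp: one_h_def)
  moreover have "summable (\<lambda>n::nat. if n \<in> {0} then (1::real) else 0)"
    by (rule summable_If_finite_set) simp
  ultimately show ?thesis unfolding l2_def by simp
qed

lemma l2_shiftz: "l2 f \<Longrightarrow> l2 (shiftz f)"
proof -
  assume "l2 f"
  hence "summable (\<lambda>n. (cmod (shiftz f (Suc n)))^2)" by (simp add: shiftz_def l2_def)
  thus ?thesis unfolding l2_def using summable_Suc_iff[of "\<lambda>n. (cmod (shiftz f n))^2"] by simp
qed

lemma summable_inner: "l2 f \<Longrightarrow> l2 g \<Longrightarrow> summable (\<lambda>n. norm (f n * cnj (g n)))"
  unfolding l2_def
proof -
  assume a: "summable (\<lambda>n. (cmod (f n))\<^sup>2)" "summable (\<lambda>n. (cmod (g n))\<^sup>2)"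
  have "norm (norm (f n * cnj (g n))) \<le> (cmod (f n))\<^sup>2 + (cmod (g n))\<^sup>2" for n
  proof -
    have p: "0 \<le> cmod (f n) * cmod (g n)" by simp
    have q: "2 * cmod (f n) * cmod (g n) \<le> (cmod (f n))\<^sup>2 + (cmod (g n))\<^sup>2" by (rule sum_squares_bound)
    show ?thesis by (simp add: norm_mult, insert p q, linarith)
  qed
  moreover have "summable (\<lambda>n. (cmod (f n))\<^sup>2 + (cmod (g n))\<^sup>2)"
    using a by (intro summable_add) auto
  ultimately show "summable (\<lambda>n. norm (f n * cnj (g n)))"
    by (meson summable_comparison_test')
qed

lemma summable_inner': "l2 f \<Longrightarrow> l2 g \<Longrightarrow> summable (\<lambda>n. f n * cnj (g n))"
  by (rule summable_norm_cancel[OF summable_inner])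

lemma suminf_cnj: "summable f \<Longrightarrow> (\<Sum>n. cnj (f n)) = cnj (suminf f)"
proof -
  assume "summable f"
  hence "(\<lambda>n. cnj (f n)) sums cnj (suminf f)" by (simp add: sums_cnj summable_sums)
  thus ?thesis by (rule sums_unique[symmetric])
qed

lemma hinner_cnj: "l2 f \<Longrightarrow> l2 g \<Longrightarrow> hinner g f = cnj (hinner f g)"
  unfolding hinner_def by (subst suminf_cnj[symmetric]) (auto simp: summable_inner' mult.commute)

lemma hinner_add_left: "l2 f \<Longrightarrow> l2 g \<Longrightarrow> l2 h \<Longrightarrow>
   hinner (\<lambda>n. f n + g n) h = hinner f h + hinner g h"
  unfolding hinner_def by (subst suminf_add) (auto simp: summable_inner' distrib_right)

lemma hinner_diff_left: "l2 f \<Longrightarrow> l2 g \<Longrightarrow> l2 h \<Longrightarrow>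
   hinner (\<lambda>n. f n - g n) h = hinner f h - hinner g h"
  unfolding hinner_def by (subst suminf_diff) (auto simp: summable_inner' left_diff_distrib)

lemma hinner_scale_left: "l2 f \<Longrightarrow> l2 h \<Longrightarrow> hinner (\<lambda>n. c * f n) h = c * hinner f h"
  unfolding hinner_def by (subst suminf_mult[symmetric]) (auto simp: summable_inner' mult.assoc)

lemma hinner_sum_left: "finite S \<Longrightarrow> (\<And>i. i \<in> S \<Longrightarrow> l2 (f i)) \<Longrightarrow> l2 h \<Longrightarrow>
   hinner (\<lambda>n. \<Sum>i\<in>S. c i * f i n) h = (\<Sum>i\<in>S. c i * hinner (f i) h)"
proof (induction S rule: finite_induct)
  case empty then show ?case by (simp add: hinner_def)
next
  case (insert x F)
  have e: "(\<lambda>n. \<Sum>i\<in>insert x F. c i * f i n) = (\<lambda>n. c x * f x n + (\<Sum>i\<in>F. c i * f i n))"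
    using insert by simp
  have "l2 (\<lambda>n. \<Sum>i\<in>F. c i * f i n)" using insert by (intro l2_sum) auto
  then show ?case unfolding e using insert
    by (simp add: hinner_add_left l2_scale hinner_scale_left)
qed

lemma hinner_add_right: "l2 f \<Longrightarrow> l2 g \<Longrightarrow> l2 h \<Longrightarrow>
   hinner h (\<lambda>n. f n + g n) = hinner h f + hinner h g"
  by (simp add: hinner_cnj[of _ h] hinner_add_left l2_add)

lemma hinner_scale_right: "l2 f \<Longrightarrow> l2 h \<Longrightarrow> hinner h (\<lambda>n. c * f n) = cnj c * hinner h f"
  by (simp add: hinner_cnj[of _ h] hinner_scale_left l2_scale)

lemma hinner_sum_right: "finite S \<Longrightarrow> (\<And>i. i \<in> S \<Longrightarrow> l2 (f i)) \<Longrightarrow> l2 h \<Longrightarrow>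
   hinner h (\<lambda>n. \<Sum>i\<in>S. c i * f i n) = (\<Sum>i\<in>S. cnj (c i) * hinner h (f i))"
  by (simp add: hinner_cnj[of _ h] hinner_sum_left l2_sum)

lemma hinner_zero_left[simp]: "hinner (\<lambda>n. 0) h = 0" by (simp add: hinner_def)
lemma hinner_zero_right[simp]: "hinner h (\<lambda>n. 0) = 0" by (simp add: hinner_def)

lemma hinner_self: "l2 f \<Longrightarrow> hinner f f = of_real ((hnorm f)^2)"
proof -
  assume f: "l2 f"
  have "hinner f f = (\<Sum>n. complex_of_real ((cmod (f n))^2))"
    unfolding hinner_def by (simp only: complex_norm_square)
  also have "\<dots> = of_real (\<Sum>n. (cmod (f n))^2)"
    using f unfolding l2_def by (rule suminf_of_real[symmetric])
  also have "\<dots> = of_real ((hnorm f)^2)"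
  proof -
    have "0 \<le> (\<Sum>n. (cmod (f n))^2)" by (rule suminf_nonneg) (use f in \<open>auto simp: l2_def\<close>)
    thus ?thesis unfolding hnorm_def by simp
  qed
  finally show ?thesis .
qed

lemma hnorm_nonneg: "l2 f \<Longrightarrow> hnorm f \<ge> 0"
  unfolding hnorm_def l2_def by (simp add: suminf_nonneg)

lemma hnorm_eq_0: "l2 f \<Longrightarrow> hnorm f = 0 \<longleftrightarrow> f = (\<lambda>n. 0)"
proof -
  assume f: "l2 f"
  have "0 \<le> (\<Sum>n. (cmod (f n))^2)" by (rule suminf_nonneg) (use f in \<open>auto simp: l2_def\<close>)
  hence "hnorm f = 0 \<longleftrightarrow> (\<Sum>n. (cmod (f n))^2) = 0"
    unfolding hnorm_def by simp
  also have "\<dots> \<longleftrightarrow> (\<forall>n. (cmod (f n))^2 = 0)"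
    using f unfolding l2_def by (intro suminf_eq_zero_iff) auto
  finally show ?thesis by auto
qed

lemma hnorm_pos: "l2 f \<Longrightarrow> f \<noteq> (\<lambda>n. 0) \<Longrightarrow> hnorm f > 0"
  using hnorm_eq_0 hnorm_nonneg by force

lemma hinner_self_eq_0: "l2 f \<Longrightarrow> hinner f f = 0 \<longleftrightarrow> f = (\<lambda>n. 0)"
  by (simp add: hinner_self hnorm_eq_0)

lemma hnorm_scale: "l2 f \<Longrightarrow> hnorm (\<lambda>n. c * f n) = cmod c * hnorm f"
proof -
  assume f: "l2 f"
  have "(\<Sum>n. (cmod (c * f n))^2) = (cmod c)^2 * (\<Sum>n. (cmod (f n))^2)"
    using f unfolding l2_def by (simp add: norm_mult power_mult_distrib suminf_mult)
  thus ?thesis unfolding hnorm_def by (simp add: real_sqrt_mult)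
qed

lemma hinner_one: "hinner one_h one_h = 1"
proof -
  have "(\<lambda>n. one_h n * cnj (one_h n)) = (\<lambda>n. if n = 0 then 1 else 0)" by (auto simp: one_h_def)
  moreover have "(\<lambda>n::nat. if n = 0 then (1::complex) else 0) sums 1"
    using sums_single[of 0 "\<lambda>_. 1::complex"] by simp
  ultimately show ?thesis unfolding hinner_def by (simp add: sums_iff)
qed

lemma pythag:
  assumes "l2 d" "l2 g" "hinner d g = 0"
  shows "hinner (\<lambda>n. d n + g n) (\<lambda>n. d n + g n) = hinner d d + hinner g g"
proof -
  have gd: "hinner g d = 0" using hinner_cnj[OF assms(1,2)] assms(3) by simp
  show ?thesis using assms gd
    by (simp add: hinner_add_left hinner_add_right l2_add)
qed

lemma sum_single: "finite S \<Longrightarrow> k \<in> S \<Longrightarrow> (\<And>m. m \<in> S \<Longrightarrow> m \<noteq> k \<Longrightarrow> g m = 0) \<Longrightarrow> sum g S = g k"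
  by (subst sum.remove[of S k]) auto

lemma hinner_orth_comb:
  assumes "finite I" "k \<in> I" "\<And>m. m \<in> I \<Longrightarrow> l2 (f m)"
    and orth: "\<And>m. m \<in> I \<Longrightarrow> m \<noteq> k \<Longrightarrow> hinner (f m) (f k) = 0"
  shows "hinner (\<lambda>n. \<Sum>m\<in>I. c m * f m n) (f k) = c k * hinner (f k) (f k)"
proof -
  have "hinner (\<lambda>n. \<Sum>m\<in>I. c m * f m n) (f k) = (\<Sum>m\<in>I. c m * hinner (f m) (f k))"
    using assms by (intro hinner_sum_left) auto
  also have "\<dots> = c k * hinner (f k) (f k)" by (rule sum_single) (use assms in auto)
  finally show ?thesis .
qed

lemma orth_comb_zero:
  assumes "finite I" "k \<in> I" "\<And>m. m \<in> I \<Longrightarrow> l2 (f m)" "f k \<noteq> (\<lambda>n. 0)"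
    and "\<And>m. m \<in> I \<Longrightarrow> m \<noteq> k \<Longrightarrow> hinner (f m) (f k) = 0"
    and "(\<lambda>n. \<Sum>m\<in>I. c m * f m n) = (\<lambda>n. 0)"
  shows "c k = 0"
  using hinner_orth_comb[of I k f c] hinner_self_eq_0[of "f k"] assms by auto

text \<open>Sequences form a complex vector space under pointwise operations; this gives access
  to the library's dimension theory (independent sets are no larger than spanning sets).\<close>

definition fscale :: "complex \<Rightarrow> (nat \<Rightarrow> complex) \<Rightarrow> (nat \<Rightarrow> complex)" where
  "fscale c f = (\<lambda>n. c * f n)"

interpretation fv: vector_space fscale
  by unfold_locales (auto simp: fscale_def algebra_simps fun_eq_iff)

lemma fsum_apply: "(\<Sum>v\<in>S. g v) n = (\<Sum>v\<in>S. g v n)"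
  for g :: "'a \<Rightarrow> nat \<Rightarrow> complex"
  by (induction S rule: infinite_finite_induct) auto

lemma fv_comb_reindex:
  assumes "inj_on f I"
  shows "(\<Sum>x\<in>f ` I. fscale (c x) x) = (\<lambda>n. \<Sum>m\<in>I. c (f m) * f m n)"
  using assms by (simp add: sum.reindex fun_eq_iff fsum_apply fscale_def)

lemma orth_family_independent:
  assumes fin: "finite I" and l2f: "\<And>m. m \<in> I \<Longrightarrow> l2 (f m)"
    and fnz: "\<And>m. m \<in> I \<Longrightarrow> f m \<noteq> (\<lambda>n. 0)"
    and orth: "\<And>m k. m \<in> I \<Longrightarrow> k \<in> I \<Longrightarrow> m \<noteq> k \<Longrightarrow> hinner (f m) (f k) = 0"
  shows "inj_on f I" and "fv.independent (f ` I)"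
proof -
  show inj: "inj_on f I"
  proof (rule inj_onI)
    fix m k assume mk: "m \<in> I" "k \<in> I" "f m = f k"
    show "m = k"
    proof (rule ccontr)
      assume "m \<noteq> k"
      hence "hinner (f m) (f m) = 0" using orth[of m k] mk by simp
      thus False using hinner_self_eq_0[OF l2f] fnz mk by blast
    qed
  qed
  show "fv.independent (f ` I)"
  proof
    assume "fv.dependent (f ` I)"
    then obtain c where c: "\<exists>x\<in>f ` I. c x \<noteq> 0" "(\<Sum>x\<in>f ` I. fscale (c x) x) = 0"
      using fv.dependent_finite[of "f ` I"] fin by blast
    from c(1) obtain k where k: "k \<in> I" "c (f k) \<noteq> 0" by blast
    have z: "(\<lambda>n. \<Sum>m\<in>I. c (f m) * f m n) = (\<lambda>n. 0)"
      using c(2) fv_comb_reindex[OF inj, of c] by (simp add: zero_fun_def)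
    have "c (f k) = 0"
      by (rule orth_comb_zero[of I k f "\<lambda>m. c (f m)", OF fin k(1) l2f fnz[OF k(1)] _ z])
        (use orth k in auto)
    thus False using k by simp
  qed
qed

section \<open>Geometric decay of rational power series\<close>

definition decay :: "(nat \<Rightarrow> complex) \<Rightarrow> bool" where
  "decay v \<longleftrightarrow> (\<exists>M r. 0 < r \<and> r < 1 \<and> (\<forall>n. cmod (v n) \<le> M * r^n))"

lemma decay_l2: "decay v \<Longrightarrow> l2 v"
proof -
  assume "decay v"
  then obtain M r where r: "0 < r" "r < 1" and b: "\<And>n. cmod (v n) \<le> M * r^n"
    unfolding decay_def by blast
  have "norm ((cmod (v n))^2) \<le> M^2 * (r^2)^n" for n
  proof -
    have "(cmod (v n))^2 \<le> (M * r^n)^2" using b[of n] by (intro power_mono) auto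
    thus ?thesis by (simp add: power_mult_distrib power_mult[symmetric] mult.commute)
  qed
  moreover have "summable (\<lambda>n. M^2 * (r^2)^n)"
    using r by (intro summable_mult summable_geometric) (auto simp: power_less_one_iff abs_square_less_1)
  ultimately show ?thesis unfolding l2_def by (meson summable_comparison_test')
qed

lemma radius_decay:
  fixes F :: "complex fps"
  assumes "fps_conv_radius F > 1"
  shows "decay (fps_nth F)"
proof -
  obtain \<rho> :: real where \<rho>: "1 < \<rho>" "ereal \<rho> < fps_conv_radius F"
  proof (cases "fps_conv_radius F")
    case (real R)
    with assms show ?thesis by (intro that[of "(1 + R)/2"]) auto
  next
    case PInf
    then show ?thesis by (intro that[of 2]) auto
  next
    case MInf
    with assms show ?thesis by simp
  qed
  have s: "summable (\<lambda>n. norm (fps_nth F n * (of_real \<rho>)^n))"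
    using \<rho> by (intro abs_summable_in_conv_radius) (auto simp: fps_conv_radius_def)
  define M where "M = (\<Sum>n. norm (fps_nth F n * (of_real \<rho>)^n))"
  have "norm (fps_nth F n * (of_real \<rho>)^n) \<le> M" for n
  proof -
    have "sum (\<lambda>n. norm (fps_nth F n * (of_real \<rho>)^n)) {n} \<le> M"
      unfolding M_def by (rule sum_le_suminf[OF s]) auto
    thus ?thesis by simp
  qed
  hence "cmod (fps_nth F n) \<le> M * (1/\<rho>)^n" for n
    using \<rho> by (simp add: norm_mult norm_power field_simps)
  thus ?thesis unfolding decay_def using \<rho> by (intro exI[of _ M] exI[of _ "1/\<rho>"]) auto
qed

lemma radius_mult_gt1:
  fixes F G :: "complex fps"
  shows "fps_conv_radius F > 1 \<Longrightarrow> fps_conv_radius G > 1 \<Longrightarrow> fps_conv_radius (F * G) > 1"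
  using fps_conv_radius_mult[of F G] by (smt (verit) less_le_trans min_less_iff_conj)

lemma geom_inverse:
  fixes c :: complex
  shows "inverse (fps_of_poly [:1, -c:]) = Abs_fps (\<lambda>n. c^n)"
proof (rule fps_inverse_unique, rule fps_ext)
  fix n
  have e: "fps_of_poly [:1, -c:] = 1 + fps_const (-c) * fps_X"
    by (simp add: fps_of_poly_pCons mult.commute)
  show "fps_nth (fps_of_poly [:1, - c:] * Abs_fps (\<lambda>n. c ^ n)) n = fps_nth (1 :: complex fps) n"
    unfolding e by (cases n) (auto simp: algebra_simps mult.assoc)
qed

lemma geom_radius:
  fixes c :: complex
  assumes "cmod c < 1"
  shows "fps_conv_radius (Abs_fps (\<lambda>n. c^n)) > 1"
proof (cases "c = 0")
  case True
  have "Abs_fps (\<lambda>n. c^n) = 1" using True by (intro fps_ext) auto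
  thus ?thesis by simp
next
  case False
  have "fps_conv_radius (Abs_fps (\<lambda>n. c^n)) \<ge> ereal (1 / cmod c)"
    unfolding fps_conv_radius_def
  proof (rule conv_radius_geI_ex')
    fix r :: real assume r: "0 < r" "ereal r < ereal (1 / cmod c)"
    hence "cmod c * r < 1" using False by (simp add: field_simps)
    hence "summable (\<lambda>n. (c * of_real r)^n)"
      by (intro summable_geometric) (simp add: norm_mult abs_of_pos r)
    thus "summable (\<lambda>n. fps_nth (Abs_fps (\<lambda>n. c ^ n)) n * of_real r ^ n)"
      by (simp add: power_mult_distrib)
  qed
  moreover have "(1::ereal) < ereal (1 / cmod c)" using assms False by (simp add: field_simps)
  ultimately show ?thesis by (metis less_le_trans)
qed

text \<open>If the polynomial B has no zero on the closed unit disc, 1/B has radius of convergence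
  greater than 1: split off one linear factor (1 - z/a) with |a| > 1 at a time.\<close>

lemma inv_radius:
  fixes B :: "complex poly"
  assumes "poly B 0 = 1" "\<forall>z. cmod z \<le> 1 \<longrightarrow> poly B z \<noteq> 0"
  shows "fps_conv_radius (inverse (fps_of_poly B)) > 1"
  using assms
proof (induction "degree B" arbitrary: B rule: less_induct)
  case less
  show ?case
  proof (cases "degree B = 0")
    case True
    then obtain b where "B = [:b:]" by (meson degree_eq_zeroE)
    with less.prems have "B = 1" by (simp add: one_pCons)
    thus ?thesis by simp
  next
    case False
    obtain a where a: "poly B a = 0"
      using fundamental_theorem_of_algebra[of B] constant_degree[of B] False by auto
    with less.prems have a1: "cmod a > 1" by force
    hence a0: "a \<noteq> 0" by auto
    from a obtain C where C: "B = [:-a, 1:] * C" using poly_eq_0_iff_dvd by (metis dvdE)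
    define c where "c = 1 / a"
    define D where "D = smult (-a) C"
    have BD: "B = [:1, -c:] * D"
      unfolding C D_def c_def using a0 by (simp add: field_simps)
    have C0: "C \<noteq> 0" using C False by auto
    have "degree B = 1 + degree C" unfolding C using C0 by (subst degree_mult_eq) auto
    hence degD: "degree D < degree B"
      unfolding D_def using a0 by simp
    have D0: "poly D 0 = 1" using less.prems(1) by (simp add: BD)
    have Dnz: "\<forall>z. cmod z \<le> 1 \<longrightarrow> poly D z \<noteq> 0" using less.prems(2) by (auto simp: BD)
    have rD: "fps_conv_radius (inverse (fps_of_poly D)) > 1"
      using less.hyps[OF degD D0 Dnz] .
    have c1: "cmod c < 1" using a1 by (simp add: c_def norm_divide divide_less_eq)
    have "inverse (fps_of_poly B) = Abs_fps (\<lambda>n. c^n) * inverse (fps_of_poly D)"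
      by (simp only: BD fps_of_poly_mult fps_inverse_mult geom_inverse)
    moreover have "fps_conv_radius (Abs_fps (\<lambda>n. c^n) * inverse (fps_of_poly D)) > 1"
      using fps_conv_radius_mult[of "Abs_fps (\<lambda>n. c^n)" "inverse (fps_of_poly D)"] geom_radius[OF c1] rD
      by (smt (verit) less_le_trans min_less_iff_conj)
    ultimately show ?thesis by simp
  qed
qed

section \<open>Interchanging a dominated double series\<close>

lemma infsum_suminf_nat:
  fixes g :: "nat \<Rightarrow> complex"
  assumes "summable (\<lambda>n. norm (g n))"
  shows "infsum g UNIV = suminf g"
proof -
  have "g sums suminf g" using assms summable_norm_cancel summable_sums by blast
  hence "(g has_sum suminf g) UNIV" using norm_summable_imp_has_sum[OF assms] by blast
  thus ?thesis by (rule infsumI)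
qed

lemma real_summable_on:
  fixes a :: "nat \<Rightarrow> real"
  assumes "summable a" "\<And>n. a n \<ge> 0"
  shows "a summable_on UNIV" "infsum a UNIV = suminf a"
proof -
  have s: "summable (\<lambda>n. norm (a n))" using assms by simp
  show "a summable_on UNIV" using norm_summable_imp_summable_on[OF s] .
  have "a sums suminf a" using assms summable_sums by blast
  hence "(a has_sum suminf a) UNIV" using norm_summable_imp_has_sum[OF s] by blast
  thus "infsum a UNIV = suminf a" by (rule infsumI)
qed

lemma product_dominated_summable_on:
  fixes f :: "nat \<Rightarrow> nat \<Rightarrow> complex"
  assumes bnd: "\<And>n k. norm (f n k) \<le> a n * b k"
    and sa: "summable a" and sb: "summable b" and a0: "\<And>n. a n \<ge> 0" and b0: "\<And>k. b k \<ge> 0"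
  shows "(\<lambda>(n,k). f n k) summable_on UNIV \<times> UNIV"
proof -
  have inner: "(\<lambda>k. norm (a n * b k)) summable_on UNIV" for n
    using real_summable_on(1)[of "\<lambda>k. norm (a n * b k)"] sb a0 b0 by (simp add: summable_mult abs_mult)
  have ie: "infsum (\<lambda>k. norm (a n * b k)) UNIV = a n * suminf b" for n
  proof -
    have "infsum (\<lambda>k. norm (a n * b k)) UNIV = infsum (\<lambda>k. a n * b k) UNIV"
      using a0 b0 by (intro infsum_cong) (auto simp: abs_mult)
    also have "\<dots> = suminf (\<lambda>k. a n * b k)"
      using real_summable_on(2)[of "\<lambda>k. a n * b k"] sb a0 b0 by (simp add: summable_mult)
    also have "\<dots> = a n * suminf b" using sb by (rule suminf_mult)
    finally show ?thesis .
  qed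
  have outer: "(\<lambda>n. norm (infsum (\<lambda>k. norm (a n * b k)) UNIV)) summable_on UNIV"
    unfolding ie
    using real_summable_on(1)[of "\<lambda>n. norm (a n * suminf b)"] sa a0 b0 suminf_nonneg[OF sb b0]
    by (simp add: summable_mult2 abs_mult)
  have prod: "(\<lambda>x. norm (case x of (n,k) \<Rightarrow> a n * b k)) summable_on UNIV \<times> UNIV"
    by (subst Infinite_Sum.abs_summable_on_Sigma_iff) (use inner outer in auto)
  show ?thesis
  proof (rule abs_summable_summable, rule Infinite_Sum.abs_summable_on_comparison_test[OF prod])
    fix x :: "nat \<times> nat" show "norm ((\<lambda>(n,k). f n k) x) \<le> norm ((\<lambda>(n,k). a n * b k) x)"
      using bnd[of "fst x" "snd x"] a0 b0 by (cases x) (auto simp: abs_mult)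
  qed
qed

lemma dominated_inner_summable:
  fixes f :: "nat \<Rightarrow> nat \<Rightarrow> complex"
  assumes bnd: "\<And>n k. norm (f n k) \<le> a n * b k" and sb: "summable b"
  shows "summable (\<lambda>k. norm (f n k))"
  by (rule summable_comparison_test'[where N=0, OF summable_mult[OF sb, of "a n"]]) (simp add: bnd)

lemma dominated_outer_summable:
  fixes f :: "nat \<Rightarrow> nat \<Rightarrow> complex"
  assumes bnd: "\<And>n k. norm (f n k) \<le> a n * b k" and sa: "summable a" and sb: "summable b"
  shows "summable (\<lambda>n. norm (\<Sum>k. f n k))"
proof (rule summable_comparison_test'[where N=0, OF summable_mult2[OF sa, of "suminf b"]])
  fix n
  have i: "summable (\<lambda>k. norm (f n k))" by (rule dominated_inner_summable[OF bnd sb])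
  have "norm (\<Sum>k. f n k) \<le> (\<Sum>k. norm (f n k))" using summable_norm[OF i] .
  also have "\<dots> \<le> (\<Sum>k. a n * b k)"
    by (rule suminf_le) (auto simp: bnd i summable_mult sb)
  also have "\<dots> = a n * suminf b" using sb by (rule suminf_mult)
  finally show "norm (norm (\<Sum>k. f n k)) \<le> a n * suminf b" by simp
qed

lemma suminf_swap:
  fixes f :: "nat \<Rightarrow> nat \<Rightarrow> complex"
  assumes bnd: "\<And>n k. norm (f n k) \<le> a n * b k"
    and sa: "summable a" and sb: "summable b" and a0: "\<And>n. a n \<ge> 0" and b0: "\<And>k. b k \<ge> 0"
  shows "(\<Sum>n. \<Sum>k. f n k) = (\<Sum>k. \<Sum>n. f n k)"
proof -
  have bnd': "norm (f n k) \<le> b k * a n" for n k using bnd[of n k] by (simp add: mult.commute)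
  have i1: "summable (\<lambda>k. norm (f n k))" for n by (rule dominated_inner_summable[OF bnd sb])
  have i2: "summable (\<lambda>n. norm (f n k))" for k by (rule dominated_inner_summable[OF bnd' sa])
  have o1: "summable (\<lambda>n. norm (\<Sum>k. f n k))" by (rule dominated_outer_summable[OF bnd sa sb])
  have o2: "summable (\<lambda>k. norm (\<Sum>n. f n k))" by (rule dominated_outer_summable[OF bnd' sb sa])
  have "(\<Sum>n. \<Sum>k. f n k) = infsum (\<lambda>n. infsum (\<lambda>k. f n k) UNIV) UNIV"
    by (simp add: infsum_suminf_nat[OF i1] infsum_suminf_nat[OF o1])
  also have "\<dots> = infsum (\<lambda>k. infsum (\<lambda>n. f n k) UNIV) UNIV"
    by (rule infsum_swap_banach[OF product_dominated_summable_on[OF bnd sa sb a0 b0]])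
  also have "\<dots> = (\<Sum>k. \<Sum>n. f n k)"
    by (simp add: infsum_suminf_nat[OF i2] infsum_suminf_nat[OF o2])
  finally show ?thesis .
qed

section \<open>Hankel operators with rational symbol\<close>

locale rational_symbol =
  fixes N :: nat and u :: "nat \<Rightarrow> complex" and A B :: "complex poly"
  assumes N1: "N \<ge> 1" and degA: "degree A \<le> N - 1" and degB: "degree B \<le> N"
    and B0: "poly B 0 = 1" and Bnz: "\<forall>z. cmod z \<le> 1 \<longrightarrow> poly B z \<noteq> 0"
    and ueq: "fps_of_poly B * Abs_fps u = fps_of_poly A"
begin

definition Vs :: "(nat \<Rightarrow> complex) set" where
  "Vs = {v. \<forall>k\<ge>N. fps_nth (fps_of_poly B * Abs_fps v) k = 0}"

definition vgen :: "nat \<Rightarrow> nat \<Rightarrow> complex" where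
  "vgen i = fps_nth (fps_X^i * inverse (fps_of_poly B))"

lemma invB_radius: "fps_conv_radius (inverse (fps_of_poly B)) > 1"
  using inv_radius[OF B0 Bnz] .

lemma fpsB0: "fps_nth (fps_of_poly B) 0 \<noteq> 0"
  using B0 by (simp add: poly_0_coeff_0)

lemma u_eq: "Abs_fps u = fps_of_poly A * inverse (fps_of_poly B)"
proof -
  have "Abs_fps u = (inverse (fps_of_poly B) * fps_of_poly B) * Abs_fps u"
    using inverse_mult_eq_1[OF fpsB0] by simp
  also have "\<dots> = fps_of_poly A * inverse (fps_of_poly B)"
    by (simp only: mult.assoc ueq) (simp add: mult.commute)
  finally show ?thesis .
qed

lemma decay_u: "decay u"
proof -
  have "fps_conv_radius (fps_of_poly A * inverse (fps_of_poly B)) > 1"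
    by (rule radius_mult_gt1) (auto simp: invB_radius)
  from radius_decay[OF this] have "decay (fps_nth (Abs_fps u))" by (simp flip: u_eq)
  moreover have "fps_nth (Abs_fps u) = u" by (rule ext) simp
  ultimately show ?thesis by simp
qed

lemma l2_u: "l2 u" using decay_l2[OF decay_u] .

lemma decay_vgen: "decay (vgen i)"
  unfolding vgen_def by (rule radius_decay, rule radius_mult_gt1) (auto simp: invB_radius)

lemma l2_vgen: "l2 (vgen i)" using decay_l2[OF decay_vgen] .

lemma Vs_span: "v \<in> Vs \<Longrightarrow> v = (\<lambda>n. \<Sum>i<N. fps_nth (fps_of_poly B * Abs_fps v) i * vgen i n)"
proof -
  assume v: "v \<in> Vs"
  define G where "G = fps_of_poly B * Abs_fps v"
  have G: "G = (\<Sum>i<N. fps_const (fps_nth G i) * fps_X^i)"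
  proof (rule fps_ext)
    fix k
    have "fps_nth (\<Sum>i<N. fps_const (fps_nth G i) * fps_X^i) k = (\<Sum>i<N. fps_nth G i * (if k = i then 1 else 0))"
      by (simp add: fps_sum_nth)
    also have "\<dots> = (if k < N then fps_nth G k else 0)"
      by (simp add: if_distrib cong: if_cong)
    also have "\<dots> = fps_nth G k" using v by (auto simp: Vs_def G_def)
    finally show "fps_nth G k = fps_nth (\<Sum>i<N. fps_const (fps_nth G i) * fps_X^i) k" by simp
  qed
  have "Abs_fps v = inverse (fps_of_poly B) * G"
    using inverse_mult_eq_1[OF fpsB0] by (simp add: G_def mult.assoc[symmetric])
  also have "\<dots> = (\<Sum>i<N. fps_const (fps_nth G i) * (fps_X^i * inverse (fps_of_poly B)))"
    by (subst G) (simp add: sum_distrib_left algebra_simps)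
  finally have "v n = fps_nth (\<Sum>i<N. fps_const (fps_nth G i) * (fps_X^i * inverse (fps_of_poly B))) n" for n
    by (metis fps_nth_Abs_fps)
  thus ?thesis by (auto simp: fps_sum_nth vgen_def G_def)
qed

lemma Vs_l2: "v \<in> Vs \<Longrightarrow> l2 v"
  by (subst Vs_span, assumption) (intro l2_sum, auto simp: l2_vgen)

text \<open>H_u maps l2 into V, since B u = A has degree < N; in particular H_u is bounded
  into l2.\<close>

lemma hankel_summable: "l2 h \<Longrightarrow> summable (\<lambda>n. u (n + k) * cnj (h n))"
  by (rule summable_inner') (auto simp: l2_def intro: summable_ignore_initial_segment[OF l2_u[unfolded l2_def]])

lemma hankel_Vs: "l2 h \<Longrightarrow> hankel u h \<in> Vs"
  unfolding Vs_def
proof (intro CollectI allI impI)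
  fix k assume h: "l2 h" and k: "N \<le> k"
  have B_zero: "coeff B i = 0" if "i > k" for i using that k degB by (intro coeff_eq_0) auto
  have "fps_nth (fps_of_poly B * Abs_fps (hankel u h)) k = (\<Sum>i=0..k. coeff B i * (\<Sum>n. u (n + (k - i)) * cnj (h n)))"
    by (simp add: fps_mult_nth hankel_def)
  also have "\<dots> = (\<Sum>i=0..k. (\<Sum>n. coeff B i * (u (n + (k - i)) * cnj (h n))))"
    by (intro sum.cong refl suminf_mult[symmetric] hankel_summable h)
  also have "\<dots> = (\<Sum>n. \<Sum>i=0..k. coeff B i * (u (n + (k - i)) * cnj (h n)))"
    by (intro suminf_sum[symmetric] summable_mult hankel_summable h)
  also have "\<dots> = (\<Sum>n. cnj (h n) * fps_nth (fps_of_poly B * Abs_fps u) (n + k))"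
  proof (intro suminf_cong)
    fix n
    have "fps_nth (fps_of_poly B * Abs_fps u) (n + k) = (\<Sum>i=0..n+k. coeff B i * u (n + k - i))"
      by (simp add: fps_mult_nth)
    also have "\<dots> = (\<Sum>i=0..k. coeff B i * u (n + k - i))"
      by (rule sum.mono_neutral_right) (auto simp: B_zero)
    also have "\<dots> = (\<Sum>i=0..k. coeff B i * u (n + (k - i)))"
      by (intro sum.cong refl) auto
    finally show "(\<Sum>i=0..k. coeff B i * (u (n + (k - i)) * cnj (h n))) = cnj (h n) * fps_nth (fps_of_poly B * Abs_fps u) (n + k)"
      by (simp add: sum_distrib_left algebra_simps)
  qed
  also have "\<dots> = 0"
  proof -
    have "coeff A (n + k) = 0" for n using degA k N1 by (intro coeff_eq_0) auto
    thus ?thesis by (simp add: ueq)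
  qed
  finally show "fps_nth (fps_of_poly B * Abs_fps (hankel u h)) k = 0" .
qed

lemma hankel_l2: "l2 h \<Longrightarrow> l2 (hankel u h)"
  using Vs_l2 hankel_Vs by blast

lemma ran_Vs: "h \<in> ranH u \<Longrightarrow> h \<in> Vs"
  by (auto simp: ranH_def H2_def hankel_Vs)

lemma ran_l2: "h \<in> ranH u \<Longrightarrow> l2 h"
  using ran_Vs Vs_l2 by blast

abbreviation H :: "(nat \<Rightarrow> complex) \<Rightarrow> nat \<Rightarrow> complex" where "H \<equiv> hankel u"

lemma hankel_add: "l2 a \<Longrightarrow> l2 b \<Longrightarrow> hankel u (\<lambda>n. a n + b n) = (\<lambda>k. hankel u a k + hankel u b k)"
proof
  fix k assume a: "l2 a" and b: "l2 b"
  show "hankel u (\<lambda>n. a n + b n) k = hankel u a k + hankel u b k"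
    unfolding hankel_def
    by (subst suminf_add[OF hankel_summable[OF a, of k] hankel_summable[OF b, of k]]) (simp add: algebra_simps)
qed

lemma hankel_scale: "l2 a \<Longrightarrow> hankel u (\<lambda>n. c * a n) = (\<lambda>k. cnj c * hankel u a k)"
proof
  fix k assume a: "l2 a"
  show "hankel u (\<lambda>n. c * a n) k = cnj c * hankel u a k"
    unfolding hankel_def
    by (subst suminf_mult[OF hankel_summable[OF a, of k], symmetric]) (simp add: algebra_simps)
qed

lemma hankel_zero: "hankel u (\<lambda>n. 0) = (\<lambda>k. 0)"
  unfolding hankel_def by simp

lemma hankel_sum: "finite S \<Longrightarrow> (\<And>i. i \<in> S \<Longrightarrow> l2 (f i)) \<Longrightarrow>
    hankel u (\<lambda>n. \<Sum>i\<in>S. c i * f i n) = (\<lambda>k. \<Sum>i\<in>S. cnj (c i) * hankel u (f i) k)"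
proof (induction S rule: finite_induct)
  case empty then show ?case by (simp add: hankel_zero)
next
  case (insert x F)
  have e: "(\<lambda>n. \<Sum>i\<in>insert x F. c i * f i n) = (\<lambda>n. c x * f x n + (\<Sum>i\<in>F. c i * f i n))"
    using insert by simp
  have "l2 (\<lambda>n. \<Sum>i\<in>F. c i * f i n)" using insert by (intro l2_sum) auto
  then show ?case unfolding e using insert
    by (simp add: hankel_add l2_scale hankel_scale)
qed

lemma hankel_diff: "l2 x \<Longrightarrow> l2 y \<Longrightarrow> H (\<lambda>n. x n - y n) = (\<lambda>k. H x k - H y k)"
proof -
  assume x: "l2 x" and y: "l2 y"
  have "H (\<lambda>n. x n - y n) = H (\<lambda>n. x n + (-1) * y n)" by simp
  also have "\<dots> = (\<lambda>k. H x k + cnj (-1) * H y k)"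
    by (simp only: hankel_add[OF x l2_scale[OF y]] hankel_scale[OF y])
  finally show ?thesis by simp
qed

lemma HH_scale: "l2 x \<Longrightarrow> H (H (\<lambda>n. c * x n)) = (\<lambda>n. c * H (H x) n)"
  by (simp add: hankel_scale hankel_l2)

lemma HH_diff: "l2 x \<Longrightarrow> l2 y \<Longrightarrow> H (H (\<lambda>n. x n - y n)) = (\<lambda>k. H (H x) k - H (H y) k)"
  by (simp add: hankel_diff hankel_l2)

lemma hankel_one: "hankel u one_h = u"
proof
  fix k
  have "(\<lambda>n. u (n + k) * cnj (one_h n)) = (\<lambda>n. if n = 0 then u k else 0)"
    by (auto simp: one_h_def)
  moreover have "(\<lambda>n::nat. if n = 0 then u k else 0) sums u k"
    using sums_single[of 0 "\<lambda>_. u k"] by simp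
  ultimately show "hankel u one_h k = u k" unfolding hankel_def by (simp add: sums_iff)
qed

lemma hankel_0: "hankel u y 0 = hinner u y"
  by (simp add: hankel_def hinner_def)

text \<open>Symmetry (H_u a|b) = (H_u b|a), by interchanging the double series; consequently
  H_u^2 is self-adjoint.\<close>

lemma decay_bound: "\<exists>M r. 0 \<le> M \<and> 0 < r \<and> r < 1 \<and> (\<forall>n. cmod (u n) \<le> M * r^n)"
proof -
  obtain M r where r: "0 < r" "r < 1" and b: "\<And>n. cmod (u n) \<le> M * r^n"
    using decay_u unfolding decay_def by blast
  have "cmod (u 0) \<le> M" using b[of 0] by simp
  hence "0 \<le> M" using norm_ge_zero order_trans by blast
  thus ?thesis using r b by blast
qed

lemma hankel_sym: "l2 a \<Longrightarrow> l2 b \<Longrightarrow> hinner (hankel u a) b = hinner (hankel u b) a"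
proof -
  assume a: "l2 a" and b: "l2 b"
  obtain M r where Mr: "0 \<le> M" "0 < r" "r < 1" and ub: "\<And>n. cmod (u n) \<le> M * r^n"
    using decay_bound by blast
  obtain Ca where Ca: "Ca \<ge> 0" "\<And>n. cmod (a n) \<le> Ca" using l2_bounded[OF a] by blast
  obtain Cb where Cb: "Cb \<ge> 0" "\<And>n. cmod (b n) \<le> Cb" using l2_bounded[OF b] by blast
  define f where "f k n = u (n + k) * cnj (a n) * cnj (b k)" for k n
  have bnd: "norm (f k n) \<le> (M * Cb * r^k) * (Ca * r^n)" for k n
  proof -
    have "norm (f k n) = cmod (u (n + k)) * cmod (a n) * cmod (b k)"
      by (simp add: f_def norm_mult)
    also have "\<dots> \<le> (M * r^(n+k)) * Ca * Cb"
      using ub[of "n+k"] Ca Cb Mr by (intro mult_mono) auto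
    also have "\<dots> = (M * Cb * r^k) * (Ca * r^n)" by (simp add: power_add algebra_simps)
    finally show ?thesis .
  qed
  have sw: "(\<Sum>k. \<Sum>n. f k n) = (\<Sum>n. \<Sum>k. f k n)"
    by (rule suminf_swap[OF bnd]) (use Mr Ca Cb in \<open>auto intro!: summable_mult summable_geometric\<close>)
  have "hinner (hankel u a) b = (\<Sum>k. \<Sum>n. f k n)"
    unfolding hinner_def hankel_def f_def
    by (intro suminf_cong suminf_mult2 hankel_summable[unfolded hankel_def] a)
  also have "\<dots> = (\<Sum>n. \<Sum>k. f k n)" by (rule sw)
  also have "\<dots> = hinner (hankel u b) a"
    unfolding hinner_def hankel_def f_def
    by (intro suminf_cong, subst suminf_mult2[OF hankel_summable[OF b]]) (simp add: algebra_simps)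
  finally show ?thesis .
qed

lemma HH_selfadjoint: "l2 a \<Longrightarrow> l2 b \<Longrightarrow> hinner (H (H a)) b = hinner a (H (H b))"
proof -
  assume a: "l2 a" and b: "l2 b"
  have "hinner (H (H a)) b = hinner (H b) (H a)" using hankel_sym[OF hankel_l2[OF a] b] .
  also have "\<dots> = cnj (hinner (H a) (H b))" by (rule hinner_cnj) (auto intro: hankel_l2 a b)
  also have "hinner (H a) (H b) = hinner (H (H b)) a" using hankel_sym[OF a hankel_l2[OF b]] .
  also have "cnj (hinner (H (H b)) a) = hinner a (H (H b))" by (rule hinner_cnj[symmetric]) (auto intro: hankel_l2 a b)
  finally show ?thesis .
qed

lemma eig_in_ran:
  assumes h: "l2 h" and s: "s \<noteq> 0" and eq: "H (H h) = (\<lambda>n. of_real s * h n)"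
  shows "h \<in> ranH u"
proof -
  define c where "c = complex_of_real (1/s)"
  have cc: "cnj c = c" "c * of_real s = 1" using s by (auto simp: c_def)
  have "H (\<lambda>n. c * H h n) = (\<lambda>n. cnj c * H (H h) n)"
    by (rule hankel_scale[OF hankel_l2[OF h]])
  also have "\<dots> = h" by (simp add: eq cc mult.assoc[symmetric])
  finally have "h = H (\<lambda>n. c * H h n)" by simp
  moreover have "(\<lambda>n. c * H h n) \<in> H2" unfolding H2_def by (rule CollectI, rule l2_scale, rule hankel_l2[OF h])
  ultimately show ?thesis unfolding ranH_def by blast
qed

lemma shiftz_scale: "shiftz (\<lambda>n. c * x n) = (\<lambda>n. c * shiftz x n)"
  by (auto simp: shiftz_def fun_eq_iff)

lemma Kop_eq: "l2 x \<Longrightarrow> Kop u x k = hankel u x (Suc k)"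
proof -
  assume x: "l2 x"
  have s: "summable (\<lambda>n. u (n + k) * cnj (shiftz x n))"
    by (rule hankel_summable, rule l2_shiftz[OF x])
  have "Kop u x k = (\<Sum>n. u (Suc n + k) * cnj (shiftz x (Suc n)))"
    unfolding Kop_def hankel_def using suminf_split_head[OF s] by (simp add: shiftz_def)
  also have "\<dots> = hankel u x (Suc k)" unfolding hankel_def by (simp add: shiftz_def)
  finally show ?thesis .
qed

lemma l2_Kop: "l2 x \<Longrightarrow> l2 (Kop u x)"
  unfolding Kop_def by (intro hankel_l2 l2_shiftz)

lemma KK: "l2 g \<Longrightarrow> Kop u (Kop u g) = (\<lambda>k. hankel u (hankel u g) k - hinner g u * u k)"
proof
  fix k assume g: "l2 g"
  have Hg: "l2 (hankel u g)" using hankel_l2[OF g] .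
  have s: "summable (\<lambda>n. u (n + k) * cnj (hankel u g n))" by (rule hankel_summable[OF Hg])
  have "hankel u (hankel u g) k = u k * cnj (hankel u g 0) + (\<Sum>n. u (Suc n + k) * cnj (hankel u g (Suc n)))"
    unfolding hankel_def[of u "hankel u g"] using suminf_split_head[OF s] by simp
  moreover have "cnj (hankel u g 0) = hinner g u"
    by (simp add: hankel_0 hinner_cnj[OF l2_u g])
  moreover have "Kop u (Kop u g) k = (\<Sum>n. u (Suc n + k) * cnj (hankel u g (Suc n)))"
    using Kop_eq[OF l2_Kop[OF g]] Kop_eq[OF g] by (simp add: hankel_def[of u "Kop u g"])
  ultimately show "Kop u (Kop u g) k = hankel u (hankel u g) k - hinner g u * u k"
    by (simp add: algebra_simps)
qed

lemma HHT: "l2 g \<Longrightarrow> hankel u (hankel u (shiftz g)) (Suc k) = Kop u (Kop u g) k"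
  using Kop_eq[OF l2_Kop, of g k] by (simp add: Kop_def)

lemma Kop_scale: "l2 x \<Longrightarrow> Kop u (\<lambda>n. c * x n) = (\<lambda>n. cnj c * Kop u x n)"
  unfolding Kop_def by (simp add: shiftz_scale hankel_scale l2_shiftz)

lemma Kop_ran: "l2 x \<Longrightarrow> Kop u x \<in> ranH u"
  unfolding Kop_def ranH_def H2_def using l2_shiftz by blast

text \<open>Dimension count: V has dimension at most N, so N nonzero pairwise orthogonal vectors
  of V span it.\<close>

lemma Vs_in_span: "v \<in> Vs \<Longrightarrow> v \<in> fv.span (vgen ` {..<N})"
proof -
  assume v: "v \<in> Vs"
  define c where "c i = fps_nth (fps_of_poly B * Abs_fps v) i" for i
  have "v = (\<Sum>i<N. fscale (c i) (vgen i))"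
    by (subst Vs_span[OF v]) (simp add: fun_eq_iff fsum_apply fscale_def c_def)
  also have "\<dots> \<in> fv.span (vgen ` {..<N})"
    by (intro fv.span_sum fv.span_scale fv.span_base) auto
  finally show ?thesis .
qed

lemma orth_family_spans_Vs:
  assumes fV: "\<And>m. m \<in> {1..N} \<Longrightarrow> f m \<in> Vs"
    and fnz: "\<And>m. m \<in> {1..N} \<Longrightarrow> f m \<noteq> (\<lambda>n. 0)"
    and orth: "\<And>m k. m \<in> {1..N} \<Longrightarrow> k \<in> {1..N} \<Longrightarrow> m \<noteq> k \<Longrightarrow> hinner (f m) (f k) = 0"
    and v: "v \<in> Vs"
  shows "\<exists>c. v = (\<lambda>n. \<Sum>m=1..N. c m * f m n)"
proof -
  have l2f: "l2 (f m)" if "m \<in> {1..N}" for m using Vs_l2 fV that by blast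
  define E where "E = f ` {1..N}"
  have inj: "inj_on f {1..N}" and indE: "fv.independent E"
    unfolding E_def using orth_family_independent[of "{1..N}" f] l2f fnz orth by auto
  have cardE: "card E = N" unfolding E_def using card_image[OF inj] by simp
  have finE: "finite E" unfolding E_def by simp
  have spanE: "E \<subseteq> fv.span (vgen ` {..<N})"
    using Vs_in_span fV unfolding E_def by blast
  have "v \<in> fv.span E"
  proof (rule ccontr)
    assume nv: "v \<notin> fv.span E"
    hence vE: "v \<notin> E" using fv.span_base by blast
    have "fv.independent (insert v E)" using nv indE by (simp add: fv.independent_insertI)
    moreover have "insert v E \<subseteq> fv.span (vgen ` {..<N})"
      using Vs_in_span[OF v] spanE by blast
    ultimately have "card (insert v E) \<le> card (vgen ` {..<N})"
      using fv.independent_span_bound[of "vgen ` {..<N}"] by blast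
    also have "\<dots> \<le> N" using card_image_le[of "{..<N}" vgen] by simp
    finally show False using vE finE cardE by simp
  qed
  then obtain c where "v = (\<Sum>x\<in>E. fscale (c x) x)" using fv.span_finite[OF finE] by blast
  hence "v = (\<lambda>n. \<Sum>m=1..N. c (f m) * f m n)" unfolding E_def fv_comb_reindex[OF inj] .
  thus ?thesis by (intro exI[of _ "\<lambda>m. c (f m)"])
qed

end

section \<open>The secular equation\<close>

lemma decreasing_on_interval:
  fixes f :: "nat \<Rightarrow> 'a::linorder"
  assumes dec: "\<forall>j\<in>{1..<N}. f (Suc j) < f j"
  shows "i \<in> {1..N} \<Longrightarrow> j \<in> {1..N} \<Longrightarrow> i < j \<Longrightarrow> f j < f i"
proof (induction j rule: less_induct)
  case (less j)
  then obtain k where k: "j = Suc k" by (cases j) auto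
  show ?case
  proof (cases "i = k")
    case True thus ?thesis using dec less.prems k by auto
  next
    case False
    hence "f k < f i" using less k by auto
    moreover have "f j < f k" using dec less.prems k by auto
    ultimately show ?thesis by simp
  qed
qed

lemma term_mono:
  assumes "s < t" "\<not> (s \<le> l \<and> l \<le> t)" "(c::real) > 0"
  shows "c / (l - s) < c / (l - t)"
proof (cases "l < s")
  case True
  hence "l - t < l - s" "l - s < 0" using assms by auto
  thus ?thesis using assms(3) by (simp add: divide_less_eq field_simps)
next
  case False
  hence "t < l" using assms by auto
  hence "0 < l - t" "l - t < l - s" using assms by auto
  thus ?thesis using assms(3) by (intro divide_strict_left_mono) auto
qed

lemma term_mono_le:
  assumes "s \<le> t" "\<not> (s \<le> l \<and> l \<le> t)" "(c::real) > 0"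
  shows "c / (l - s) \<le> c / (l - t)"
  using term_mono[of s t l c] assms by (cases "s = t") auto

locale secular =
  fixes N :: nat and L w :: "nat \<Rightarrow> real"
  assumes N1: "N \<ge> 1" and Lpos: "\<forall>j\<in>{1..N}. L j > 0"
    and Ldec: "\<forall>j\<in>{1..<N}. L (Suc j) < L j"
    and wpos: "\<forall>j\<in>{1..N}. w j > 0"
    and wsum: "(\<Sum>j=1..N. w j / L j) < 1"
begin

definition F :: "real \<Rightarrow> real" where "F s = (\<Sum>j=1..N. w j / (L j - s))"

lemma L_mono_le: "i \<in> {1..N} \<Longrightarrow> j \<in> {1..N} \<Longrightarrow> i \<le> j \<Longrightarrow> L j \<le> L i"
  using decreasing_on_interval[OF Ldec] by (cases "i = j") (auto simp: less_le)

lemma F_mono: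
  assumes "s < t" "\<forall>j\<in>{1..N}. \<not> (s \<le> L j \<and> L j \<le> t)"
  shows "F s < F t"
  unfolding F_def
  by (rule sum_strict_mono) (use assms N1 wpos in \<open>auto intro!: term_mono\<close>)

lemma sumR_mono:
  assumes "s \<le> t" "\<forall>j\<in>S. \<not> (s \<le> L j \<and> L j \<le> t)" "S \<subseteq> {1..N}"
  shows "(\<Sum>j\<in>S. w j / (L j - s)) \<le> (\<Sum>j\<in>S. w j / (L j - t))"
  by (rule sum_mono) (use assms wpos in \<open>auto intro!: term_mono_le\<close>)

text \<open>The m-th root will lie in the interval (lo m, L m), where lo m is the next pole
  (or 0 for the last interval); this interval contains no pole.\<close>

definition lo :: "nat \<Rightarrow> real" where "lo m = (if m < N then L (Suc m) else 0)"

lemma lo_less: "m \<in> {1..N} \<Longrightarrow> lo m < L m"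
  using Ldec Lpos by (auto simp: lo_def)

lemma no_L_between:
  assumes m: "m \<in> {1..N}" and st: "lo m < s" "t < L m"
  shows "\<forall>j\<in>{1..N}. \<not> (s \<le> L j \<and> L j \<le> t)"
proof
  fix j assume j: "j \<in> {1..N}"
  show "\<not> (s \<le> L j \<and> L j \<le> t)"
  proof (cases "j \<le> m")
    case True thus ?thesis using L_mono_le[OF j m] st by auto
  next
    case False
    hence "m < N" "Suc m \<le> j" using j by auto
    hence "L j \<le> L (Suc m)" using L_mono_le[of "Suc m" j] j m by auto
    thus ?thesis using st \<open>m < N\<close> by (auto simp: lo_def)
  qed
qed

lemma lo_nonneg: "m \<in> {1..N} \<Longrightarrow> 0 \<le> lo m"
  using Lpos by (auto simp: lo_def less_imp_le)

lemma lo_zero_last: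
  assumes m: "m \<in> {1..N}" and lo: "lo m = 0" shows "m = N"
proof (rule ccontr)
  assume "m \<noteq> N"
  hence "m < N" "L (Suc m) > 0" using Lpos m by auto
  thus False using lo by (simp add: lo_def)
qed

lemma F_cont: "\<forall>j\<in>{1..N}. L j \<notin> S \<Longrightarrow> continuous_on S F"
  unfolding F_def by (intro continuous_intros) auto

lemma F_split: "m \<in> {1..N} \<Longrightarrow> F s = w m / (L m - s) + (\<Sum>j\<in>{1..N}-{m}. w j / (L j - s))"
  unfolding F_def by (subst sum.remove[of _ m]) auto

text \<open>Near the pole L m from the left, F exceeds 1: the m-th term tends to +infinity while
  the others only increase.\<close>

lemma F_exceeds_1_below_pole:
  assumes m: "m \<in> {1..N}" and c0: "lo m < c0" "c0 < L m"
  shows "\<exists>b. c0 < b \<and> b < L m \<and> F b > 1"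
proof -
  define R where "R s = (\<Sum>j\<in>{1..N}-{m}. w j / (L j - s))" for s
  define \<delta> where "\<delta> = min ((L m - c0) / 2) (w m / (\<bar>1 - R c0\<bar> + 1))"
  have wm: "w m > 0" using wpos m by auto
  have \<delta>: "\<delta> > 0" "\<delta> \<le> (L m - c0) / 2" "\<delta> \<le> w m / (\<bar>1 - R c0\<bar> + 1)"
    unfolding \<delta>_def using c0 wm by (auto simp: min_def)
  define b where "b = L m - \<delta>"
  have b: "c0 < b" "b < L m" using \<delta> by (auto simp: b_def)
  have Rb: "R c0 \<le> R b" unfolding R_def
    by (rule sumR_mono) (use no_L_between[OF m c0(1) b(2)] b in auto)
  have "w m / (L m - b) = w m / \<delta>" by (simp add: b_def)
  also have "\<dots> \<ge> \<bar>1 - R c0\<bar> + 1"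
  proof -
    have "\<delta> * (\<bar>1 - R c0\<bar> + 1) \<le> w m" using \<delta>(3) by (simp add: le_divide_eq)
    thus ?thesis using \<delta>(1) by (simp add: le_divide_eq mult.commute)
  qed
  finally have "F b > 1" using Rb F_split[OF m, of b] unfolding R_def by linarith
  thus ?thesis using b by blast
qed

lemma F_below_1_above_pole:
  assumes m: "m \<in> {1..N}" and mN: "m < N" and c0: "lo m < c0" "c0 < L m"
  shows "\<exists>a. lo m < a \<and> a < c0 \<and> F a < 1"
proof -
  define m' where "m' = Suc m"
  have m': "m' \<in> {1..N}" using mN m by (auto simp: m'_def)
  have lom: "lo m = L m'" using mN by (simp add: lo_def m'_def)
  define R where "R s = (\<Sum>j\<in>{1..N}-{m'}. w j / (L j - s))" for s
  define \<epsilon> where "\<epsilon> = min ((c0 - L m') / 2) (w m' / (\<bar>R c0 - 1\<bar> + 1))"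
  have wm': "w m' > 0" using wpos m' by auto
  have \<epsilon>: "\<epsilon> > 0" "\<epsilon> \<le> (c0 - L m') / 2" "\<epsilon> \<le> w m' / (\<bar>R c0 - 1\<bar> + 1)"
    unfolding \<epsilon>_def using c0 wm' lom by (auto simp: min_def)
  define a where "a = L m' + \<epsilon>"
  have a: "L m' < a" "a < c0" using \<epsilon> by (auto simp: a_def)
  have nb: "\<forall>j\<in>{1..N} - {m'}. \<not> (a \<le> L j \<and> L j \<le> c0)"
  proof
    fix j assume j: "j \<in> {1..N} - {m'}"
    show "\<not> (a \<le> L j \<and> L j \<le> c0)"
    proof (cases "j \<le> m")
      case True thus ?thesis using L_mono_le[of j m] j m c0 by auto
    next
      case False
      hence "m' < j" using j by (auto simp: m'_def)
      hence "L j < L m'" using decreasing_on_interval[OF Ldec, of m' j] j m' by auto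
      thus ?thesis using a by auto
    qed
  qed
  have Ra: "R a \<le> R c0" unfolding R_def
    by (rule sumR_mono) (use nb a in auto)
  have "w m' / (L m' - a) = - (w m' / \<epsilon>)" by (simp add: a_def)
  also have "\<dots> \<le> - (\<bar>R c0 - 1\<bar> + 1)"
  proof -
    have "\<epsilon> * (\<bar>R c0 - 1\<bar> + 1) \<le> w m'" using \<epsilon>(3) by (simp add: le_divide_eq)
    hence "\<bar>R c0 - 1\<bar> + 1 \<le> w m' / \<epsilon>" using \<epsilon>(1) by (simp add: le_divide_eq mult.commute)
    thus ?thesis by simp
  qed
  finally have "F a < 1" using Ra F_split[OF m', of a] unfolding R_def by linarith
  thus ?thesis using a lom by auto
qed

lemma root_exists:
  assumes m: "m \<in> {1..N}"
  shows "\<exists>x. lo m < x \<and> x < L m \<and> F x = 1"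
proof -
  define c0 where "c0 = (lo m + L m) / 2"
  have c0: "lo m < c0" "c0 < L m" using lo_less[OF m] by (auto simp: c0_def)
  obtain b where b: "c0 < b" "b < L m" "F b > 1" using F_exceeds_1_below_pole[OF m c0] by blast
  obtain a where a: "lo m < a \<or> (a = 0 \<and> lo m = 0)" "a < b" "F a < 1"
  proof (cases "m < N")
    case True
    then obtain a where "lo m < a" "a < c0" "F a < 1"
      using F_below_1_above_pole[OF m True c0] by blast
    thus ?thesis using that[of a] b(1) by simp
  next
    case False
    hence "lo m = 0" by (simp add: lo_def)
    moreover have "F 0 < 1" using wsum by (simp add: F_def)
    ultimately show ?thesis using that[of 0] c0 b(1) by simp
  qed
  have "\<forall>j\<in>{1..N}. \<not> (a \<le> L j \<and> L j \<le> b)"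
  proof (cases "lo m < a")
    case True thus ?thesis using no_L_between[OF m True b(2)] by blast
  next
    case False
    hence "m = N" using a(1) lo_zero_last[OF m] by simp
    thus ?thesis using L_mono_le[OF _ m] b(2) by fastforce
  qed
  hence "continuous_on {a..b} F" by (intro F_cont) auto
  then obtain x where x: "a \<le> x" "x \<le> b" "F x = 1"
    using IVT'[of F a 1 b] a b by auto
  have "x \<noteq> a" using x a by auto
  hence "lo m < x" using x a by auto
  thus ?thesis using x b by auto
qed

lemma root_pos:
  assumes Fs: "F s = 1" shows "0 < s"
proof (rule ccontr)
  assume "\<not> 0 < s"
  hence "F s \<le> (\<Sum>j=1..N. w j / L j)" unfolding F_def
  proof (intro sum_mono divide_left_mono)
    fix j assume j: "j \<in> {1..N}" and "\<not> 0 < s"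
    thus "0 \<le> w j" "L j \<le> L j - s" using wpos by (auto simp: less_imp_le)
    have "0 < L j" using Lpos j by auto
    thus "0 < (L j - s) * L j" using \<open>\<not> 0 < s\<close> by (intro mult_pos_pos) auto
  qed
  thus False using wsum Fs by simp
qed

lemma root_below_L1:
  assumes sL: "\<forall>j\<in>{1..N}. s \<noteq> L j" and Fs: "F s = 1" shows "s < L 1"
proof (rule ccontr)
  have N1': "1 \<in> {1..N}" using N1 by auto
  assume "\<not> s < L 1"
  hence "s > L 1" using sL N1' by force
  hence "F s \<le> 0" unfolding F_def
  proof (intro sum_nonpos divide_nonneg_nonpos)
    fix j assume j: "j \<in> {1..N}" and s: "L 1 < s"
    thus "0 \<le> w j" using wpos by (auto simp: less_imp_le)
    have "L j \<le> L 1" using L_mono_le[OF N1' j] j by auto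
    thus "L j - s \<le> 0" using s by simp
  qed
  thus False using Fs by simp
qed

lemma root_interval:
  assumes sL: "\<forall>j\<in>{1..N}. s \<noteq> L j" and Fs: "F s = 1"
  shows "\<exists>m\<in>{1..N}. lo m < s \<and> s < L m"
proof -
  define M where "M = {m\<in>{1..N}. s < L m}"
  have M: "finite M" "1 \<in> M" using N1 root_below_L1[OF sL Fs] by (auto simp: M_def)
  define m where "m = Max M"
  have "m \<in> M" using M unfolding m_def by (intro Max_in) auto
  hence m: "m \<in> {1..N}" "s < L m" by (auto simp: M_def)
  have "lo m < s"
  proof (cases "m < N")
    case True
    hence "Suc m \<notin> M" using Max_ge[OF M(1), of "Suc m"] m_def by auto
    hence "L (Suc m) \<le> s" using True m by (auto simp: M_def)
    moreover have "L (Suc m) \<noteq> s" using sL True m by auto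
    ultimately show ?thesis using True by (auto simp: lo_def)
  next
    case False thus ?thesis using root_pos[OF Fs] by (simp add: lo_def)
  qed
  thus ?thesis using m by blast
qed

lemma root_unique:
  assumes m: "m \<in> {1..N}" and s: "lo m < s" "s < L m" and t: "lo m < t" "t < L m"
    and eq: "F s = F t"
  shows "s = t"
proof (rule ccontr)
  assume "s \<noteq> t"
  then consider "s < t" | "t < s" by linarith
  thus False
  proof cases
    case 1 thus False using F_mono[OF 1 no_L_between[OF m s(1) t(2)]] eq by simp
  next
    case 2 thus False using F_mono[OF 2 no_L_between[OF m t(1) s(2)]] eq by simp
  qed
qed

theorem secular_roots:
  "\<exists>\<sigma>. (\<forall>m\<in>{1..N}. 0 < \<sigma> m \<and> \<sigma> m < L m) \<and> (\<forall>m\<in>{1..<N}. L (Suc m) < \<sigma> m) \<and>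
     {s. (\<forall>j\<in>{1..N}. s \<noteq> L j) \<and> F s = 1} = \<sigma> ` {1..N}"
proof -
  define \<sigma> where "\<sigma> m = (SOME x. lo m < x \<and> x < L m \<and> F x = 1)" for m
  have \<sigma>: "lo m < \<sigma> m" "\<sigma> m < L m" "F (\<sigma> m) = 1" if "m \<in> {1..N}" for m
    using someI_ex[OF root_exists[OF that]] unfolding \<sigma>_def by blast+
  have "{s. (\<forall>j\<in>{1..N}. s \<noteq> L j) \<and> F s = 1} = \<sigma> ` {1..N}"
  proof (intro equalityI subsetI)
    fix x assume "x \<in> \<sigma> ` {1..N}"
    then obtain m where m: "m \<in> {1..N}" "x = \<sigma> m" by blast
    have "\<forall>j\<in>{1..N}. \<not> (\<sigma> m \<le> L j \<and> L j \<le> \<sigma> m)" by (rule no_L_between[OF m(1) \<sigma>(1,2)[OF m(1)]])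
    thus "x \<in> {s. (\<forall>j\<in>{1..N}. s \<noteq> L j) \<and> F s = 1}" using \<sigma>(3)[OF m(1)] m(2) by auto
  next
    fix s assume "s \<in> {s. (\<forall>j\<in>{1..N}. s \<noteq> L j) \<and> F s = 1}"
    hence sL: "\<forall>j\<in>{1..N}. s \<noteq> L j" and Fs: "F s = 1" by auto
    obtain m where m: "m \<in> {1..N}" "lo m < s" "s < L m" using root_interval[OF sL Fs] by blast
    have "s = \<sigma> m" by (rule root_unique[OF m \<sigma>(1,2)[OF m(1)]]) (simp add: Fs \<sigma>(3)[OF m(1)])
    thus "s \<in> \<sigma> ` {1..N}" using m by blast
  qed
  moreover have "\<forall>m\<in>{1..N}. 0 < \<sigma> m \<and> \<sigma> m < L m"
  proof
    fix m assume m: "m \<in> {1..N}"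
    show "0 < \<sigma> m \<and> \<sigma> m < L m" using \<sigma>(1,2)[OF m] lo_nonneg[OF m] by linarith
  qed
  moreover have "\<forall>m\<in>{1..<N}. L (Suc m) < \<sigma> m"
  proof
    fix m assume "m \<in> {1..<N}"
    hence m: "m \<in> {1..N}" "m < N" by auto
    show "L (Suc m) < \<sigma> m" using \<sigma>(1)[OF m(1)] m(2) by (simp add: lo_def)
  qed
  ultimately show ?thesis by blast
qed

end

section \<open>The spectral data of H_u^2\<close>

lemma H2pow_Suc: "H2pow u (Suc k) x = hankel u (hankel u (H2pow u k x))"
  by (simp add: H2pow_def)

lemma poly_vanishing_off:
  fixes x :: "nat \<Rightarrow> complex"
  assumes N1: "N \<ge> 1" and j: "j \<in> {1..N}"
  shows "\<exists>p. coeff p N = 1 \<and> (\<forall>z. poly p z = (\<Sum>k=1..N. coeff p k * z^k)) \<and>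
             (\<forall>i\<in>{1..N}-{j}. poly p (x i) = 0)"
proof -
  define Q where "Q = (\<Prod>i\<in>{1..N}-{j}. [:- x i, 1:])"
  define p :: "complex poly" where "p = [:0, 1:] * Q"
  have nz: "\<forall>i\<in>{1..N}-{j}. [:- x i, 1:] \<noteq> 0" by simp
  have Q0: "Q \<noteq> 0" unfolding Q_def using nz by (simp add: prod_zero_iff)
  have degp: "degree p = N"
  proof -
    have "degree p = degree [:0, 1::complex:] + degree Q"
      unfolding p_def by (rule degree_mult_eq) (use Q0 in auto)
    also have "\<dots> = 1 + (N - 1)"
      using degree_prod_eq_sum_degree[OF nz] j by (simp add: Q_def)
    finally show ?thesis using N1 by simp
  qed
  have "coeff p N = 1"
    using degp lead_coeff_mult[of "[:0,1:]" Q] lead_coeff_prod[of "\<lambda>i. [:- x i, 1:]" "{1..N}-{j}"]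
    unfolding p_def Q_def by simp
  moreover have "poly p z = (\<Sum>k=1..N. coeff p k * z^k)" for z
  proof -
    have c0: "coeff p 0 = 0" unfolding p_def by (simp add: poly_0_coeff_0[symmetric])
    have "poly p z = (\<Sum>k\<le>N. coeff p k * z^k)" by (simp add: poly_altdef degp)
    also have "\<dots> = coeff p 0 * z^0 + (\<Sum>k=1..N. coeff p k * z^k)"
      by (simp add: atMost_atLeast0 sum.atLeast_Suc_atMost)
    finally show ?thesis by (simp add: c0)
  qed
  moreover have "poly p (x i) = 0" if "i \<in> {1..N}-{j}" for i
    unfolding p_def Q_def using that by (simp add: poly_prod) (metis Diff_iff atLeastAtMost_iff singletonD)
  ultimately show ?thesis by blast
qed

lemma partial_fractions:
  fixes L s r x :: real
  assumes "L - s \<noteq> 0" "L - r \<noteq> 0" "s \<noteq> r"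
  shows "x / ((L - s) * (L - r)) = (x / (L - s) - x / (L - r)) / (s - r)"
proof -
  have "x / (L - s) - x / (L - r) = x * (s - r) / ((L - s) * (L - r))"
    using assms by (simp add: divide_simps) (simp add: algebra_simps)
  thus ?thesis using assms by simp
qed

lemma Im_real_div:
  fixes w l :: real and \<sigma> :: complex
  shows "Im (complex_of_real w / (of_real l - \<sigma>)) = w * Im \<sigma> / (cmod (of_real l - \<sigma>))^2"
  by (simp add: Im_divide')

lemma exp_arg:
  fixes t :: complex
  assumes t: "t \<noteq> 0"
  shows "exp (\<i> * of_real (Arg ((cnj t)^2))) = cnj t / t"
    and "exp (- (\<i> * of_real (Arg ((cnj t)^2)))) = t / cnj t"
proof -
  define z where "z = (cnj t)^2"
  have z0: "z \<noteq> 0" using t by (simp add: z_def)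
  have "exp (\<i> * of_real (Arg z)) = sgn z" by (simp add: cis_conv_exp[symmetric] cis_Arg z0)
  also have "\<dots> = z / of_real (cmod z)" by (simp add: sgn_div_norm scaleR_conv_of_real divide_inverse mult.commute)
  also have "of_real (cmod z) = t * cnj t"
    by (simp add: z_def norm_power complex_norm_square[symmetric])
  also have "z / (t * cnj t) = cnj t / t" using t by (simp add: z_def power2_eq_square field_simps)
  finally have e: "exp (\<i> * of_real (Arg z)) = cnj t / t" .
  thus "exp (\<i> * of_real (Arg ((cnj t)^2))) = cnj t / t" by (simp add: z_def)
  have "exp (- (\<i> * of_real (Arg z))) = inverse (exp (\<i> * of_real (Arg z)))" by (rule exp_minus)
  also have "\<dots> = t / cnj t" using e by simp
  finally show "exp (- (\<i> * of_real (Arg ((cnj t)^2)))) = t / cnj t" by (simp add: z_def)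
qed

lemma scal_cancel: "f \<noteq> (\<lambda>n. 0) \<Longrightarrow> (\<lambda>n. x * f n) = (\<lambda>n. y * f n) \<Longrightarrow> x = (y::complex)"
  by (metis (no_types, lifting) ext mult_cancel_right)

locale spectral_setting = rational_symbol N u A B for N u A B +
  fixes lam :: "nat \<Rightarrow> real"
  assumes lam_pos: "\<forall>j\<in>{1..N}. lam j > 0"
    and lam_dec: "\<forall>j\<in>{1..<N}. lam (Suc j) < lam j"
    and lam_eig: "{s::real. s > 0 \<and> (\<exists>h\<in>H2. h \<noteq> (\<lambda>n. 0) \<and> hankel u (hankel u h) = (\<lambda>n. of_real s * h n))}
                  = (\<lambda>j. (lam j)^2) ` {1..N}"
    and not1: "one_h \<notin> ranH u"
    and indep: "\<forall>c :: nat \<Rightarrow> complex. (\<lambda>n. \<Sum>k=1..N. c k * H2pow u k one_h n) = (\<lambda>n. 0)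
        \<longrightarrow> (\<forall>k\<in>{1..N}. c k = 0)"
begin

definition L :: "nat \<Rightarrow> real" where "L j = (lam j)^2"

lemma L_pos: "j \<in> {1..N} \<Longrightarrow> L j > 0"
proof -
  assume "j \<in> {1..N}"
  hence "lam j > 0" using lam_pos by auto
  thus ?thesis by (simp add: L_def)
qed

lemma L_dec: "\<forall>j\<in>{1..<N}. L (Suc j) < L j"
proof
  fix j assume j: "j \<in> {1..<N}"
  hence a: "lam (Suc j) < lam j" "lam (Suc j) > 0" using lam_dec lam_pos by auto
  show "L (Suc j) < L j" unfolding L_def using power_strict_mono[OF a(1), of 2] a(2) by simp
qed

lemma L_inj: "i \<in> {1..N} \<Longrightarrow> j \<in> {1..N} \<Longrightarrow> L i = L j \<Longrightarrow> i = j"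
  using decreasing_on_interval[OF L_dec] by (metis less_irrefl nat_neq_iff)

text \<open>Choose a normalised eigenvector e_j of H_u^2 for each lambda_j^2.  Eigenvectors for
  distinct eigenvalues of the self-adjoint H_u^2 are orthogonal, and they lie in Ran H_u.\<close>

lemma eig_exists: "j \<in> {1..N} \<Longrightarrow> \<exists>h. l2 h \<and> h \<noteq> (\<lambda>n. 0) \<and> H (H h) = (\<lambda>n. of_real (L j) * h n)"
proof -
  assume "j \<in> {1..N}"
  hence "L j \<in> {s::real. s > 0 \<and> (\<exists>h\<in>H2. h \<noteq> (\<lambda>n. 0) \<and> hankel u (hankel u h) = (\<lambda>n. of_real s * h n))}"
    unfolding lam_eig L_def by blast
  thus ?thesis by (auto simp: H2_def)
qed

definition eigvec :: "nat \<Rightarrow> nat \<Rightarrow> complex" where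
  "eigvec j = (SOME h. l2 h \<and> h \<noteq> (\<lambda>n. 0) \<and> H (H h) = (\<lambda>n. of_real (L j) * h n))"

lemma eigvec_props: "j \<in> {1..N} \<Longrightarrow> l2 (eigvec j) \<and> eigvec j \<noteq> (\<lambda>n. 0) \<and> H (H (eigvec j)) = (\<lambda>n. of_real (L j) * eigvec j n)"
proof -
  assume j: "j \<in> {1..N}"
  from eig_exists[OF j] show ?thesis unfolding eigvec_def by (rule someI_ex)
qed

definition escale :: "nat \<Rightarrow> complex" where
  "escale j = complex_of_real (1 / hnorm (eigvec j))"

definition e :: "nat \<Rightarrow> nat \<Rightarrow> complex" where
  "e j = (\<lambda>n. escale j * eigvec j n)"

lemma e_l2: "j \<in> {1..N} \<Longrightarrow> l2 (e j)"
  unfolding e_def by (rule l2_scale) (use eigvec_props in blast)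

lemma e_eig: "j \<in> {1..N} \<Longrightarrow> H (H (e j)) = (\<lambda>n. of_real (L j) * e j n)"
proof -
  assume j: "j \<in> {1..N}"
  have "H (H (e j)) = (\<lambda>n. escale j * H (H (eigvec j)) n)"
    unfolding e_def by (rule HH_scale) (use eigvec_props j in blast)
  also have "\<dots> = (\<lambda>n. of_real (L j) * e j n)"
    using eigvec_props[OF j] by (simp add: e_def algebra_simps)
  finally show ?thesis .
qed

lemma e_norm: "j \<in> {1..N} \<Longrightarrow> hinner (e j) (e j) = 1"
proof -
  assume j: "j \<in> {1..N}"
  have l: "l2 (eigvec j)" and nz: "eigvec j \<noteq> (\<lambda>n. 0)" using eigvec_props[OF j] by auto
  have hn: "hnorm (eigvec j) > 0" using hnorm_pos[OF l nz] .
  have "hinner (e j) (e j) = escale j * cnj (escale j) * hinner (eigvec j) (eigvec j)"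
    unfolding e_def by (simp add: hinner_scale_left hinner_scale_right l2_scale l)
  also have "\<dots> = 1" using hn by (simp add: hinner_self[OF l] power2_eq_square escale_def)
  finally show ?thesis .
qed

lemma e_nz: "j \<in> {1..N} \<Longrightarrow> e j \<noteq> (\<lambda>n. 0)"
  using e_norm by fastforce

lemma e_orth: "i \<in> {1..N} \<Longrightarrow> j \<in> {1..N} \<Longrightarrow> i \<noteq> j \<Longrightarrow> hinner (e i) (e j) = 0"
proof -
  assume ij: "i \<in> {1..N}" "j \<in> {1..N}" "i \<noteq> j"
  have "of_real (L i) * hinner (e i) (e j) = hinner (H (H (e i))) (e j)"
    using ij by (simp add: e_eig hinner_scale_left e_l2)
  also have "\<dots> = hinner (e i) (H (H (e j)))" using ij by (intro HH_selfadjoint e_l2)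
  also have "\<dots> = of_real (L j) * hinner (e i) (e j)"
    using ij by (simp add: e_eig hinner_scale_right e_l2)
  finally have "(of_real (L i) - of_real (L j)) * hinner (e i) (e j) = 0" by (simp add: algebra_simps)
  moreover have "L i \<noteq> L j" using L_inj ij by blast
  ultimately show ?thesis by simp
qed

lemma e_ran: "j \<in> {1..N} \<Longrightarrow> e j \<in> ranH u"
  using eig_in_ran[OF e_l2 _ e_eig] L_pos by (metis less_irrefl)

definition comb :: "(nat \<Rightarrow> complex) \<Rightarrow> nat \<Rightarrow> complex" where
  "comb c = (\<lambda>n. \<Sum>m=1..N. c m * e m n)"

lemma comb_l2: "l2 (comb c)"
  unfolding comb_def by (intro l2_sum e_l2) auto

lemma hinner_comb_e: "k \<in> {1..N} \<Longrightarrow> hinner (comb c) (e k) = c k"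
  unfolding comb_def using hinner_orth_comb[of "{1..N}" k e c] e_l2 e_orth e_norm by simp

lemma hinner_e_comb: "k \<in> {1..N} \<Longrightarrow> hinner (e k) (comb c) = cnj (c k)"
  using hinner_cnj[OF comb_l2 e_l2] hinner_comb_e by simp

lemma hinner_comb_comb: "hinner (comb c) (comb d) = (\<Sum>m=1..N. c m * cnj (d m))"
proof -
  have "hinner (comb c) (comb d) = (\<Sum>m=1..N. c m * hinner (e m) (comb d))"
    unfolding comb_def[of c] by (intro hinner_sum_left e_l2 comb_l2) auto
  also have "\<dots> = (\<Sum>m=1..N. c m * cnj (d m))" by (intro sum.cong refl) (simp add: hinner_e_comb)
  finally show ?thesis .
qed

lemma hinner_comb_right: "l2 x \<Longrightarrow> hinner x (comb c) = (\<Sum>m=1..N. cnj (c m) * hinner x (e m))"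
  unfolding comb_def by (intro hinner_sum_right e_l2) auto

lemma comb_eq_iff: "comb c = comb d \<longleftrightarrow> (\<forall>m\<in>{1..N}. c m = d m)"
proof
  assume "comb c = comb d"
  thus "\<forall>m\<in>{1..N}. c m = d m" using hinner_comb_e by metis
qed (auto simp: comb_def)

lemma comb_eq_zero_iff: "comb c = (\<lambda>n. 0) \<longleftrightarrow> (\<forall>m\<in>{1..N}. c m = 0)"
  using comb_eq_iff[of c "\<lambda>m. 0"] by (simp add: comb_def)

lemma comb_lin: "(\<lambda>n. comb p n - x * comb q n) = comb (\<lambda>m. p m - x * q m)"
  by (simp add: comb_def fun_eq_iff sum_subtractf sum_distrib_left algebra_simps)

lemma comb_scale: "(\<lambda>n. x * comb c n) = comb (\<lambda>m. x * c m)"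
  by (simp add: comb_def fun_eq_iff algebra_simps sum_distrib_left)

lemma comb_sum: "(\<lambda>n. \<Sum>k\<in>K. x k * comb (d k) n) = comb (\<lambda>m. \<Sum>k\<in>K. x k * d k m)"
  unfolding comb_def by (simp add: fun_eq_iff sum_distrib_left sum_distrib_right mult.assoc sum.swap[of _ K])

text \<open>By the dimension count, (e_j) spans V, hence Ran H_u; conversely every combination of
  the e_j lies in Ran H_u.  So Ran H_u is exactly the set of combinations.\<close>

lemma expand: "v \<in> Vs \<Longrightarrow> v = comb (\<lambda>m. hinner v (e m))"
proof -
  assume v: "v \<in> Vs"
  obtain c where c: "v = comb c"
    using orth_family_spans_Vs[of e v] v e_ran ran_Vs e_nz e_orth unfolding comb_def by blast
  show ?thesis unfolding c comb_eq_iff by (simp add: hinner_comb_e)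
qed

lemma H_comb: "H (comb c) = (\<lambda>k. \<Sum>m=1..N. cnj (c m) * H (e m) k)"
  unfolding comb_def by (intro hankel_sum e_l2) auto

lemma HH_comb: "H (H (comb c)) = comb (\<lambda>m. of_real (L m) * c m)"
proof -
  have "H (H (comb c)) = H (\<lambda>k. \<Sum>m=1..N. cnj (c m) * H (e m) k)" by (simp add: H_comb)
  also have "\<dots> = (\<lambda>k. \<Sum>m=1..N. c m * H (H (e m)) k)"
    by (subst hankel_sum) (auto simp: hankel_l2 e_l2)
  also have "\<dots> = comb (\<lambda>m. of_real (L m) * c m)"
    unfolding comb_def by (intro ext sum.cong refl) (simp add: e_eig)
  finally show ?thesis .
qed

lemma comb_ran: "comb c \<in> ranH u"
proof -
  have "\<forall>m\<in>{1..N}. \<exists>x. l2 x \<and> e m = H x"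
  proof
    fix m assume "m \<in> {1..N}"
    from e_ran[OF this] show "\<exists>x. l2 x \<and> e m = H x" unfolding ranH_def H2_def by blast
  qed
  then obtain x where x: "\<And>m. m \<in> {1..N} \<Longrightarrow> l2 (x m) \<and> e m = H (x m)" by metis
  have "H (\<lambda>n. \<Sum>m=1..N. cnj (c m) * x m n) = (\<lambda>k. \<Sum>m=1..N. c m * H (x m) k)"
    by (subst hankel_sum) (use x in auto)
  also have "\<dots> = comb c" unfolding comb_def by (intro ext sum.cong refl) (simp add: x)
  finally have "comb c = H (\<lambda>n. \<Sum>m=1..N. cnj (c m) * x m n)" by simp
  moreover have "(\<lambda>n. \<Sum>m=1..N. cnj (c m) * x m n) \<in> H2" unfolding H2_def using x by (auto intro!: l2_sum)
  ultimately show ?thesis unfolding ranH_def by blast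
qed

lemma ran_char: "h \<in> ranH u \<longleftrightarrow> (\<exists>c. h = comb c)"
  using comb_ran expand ran_Vs by blast

text \<open>Pv x = sum_m (x|e_m) e_m; x - Pv x is orthogonal to Ran H_u, so Pv is the
  orthogonal projection P_u.  In particular Ran H_u is closed.\<close>

definition Pv :: "(nat \<Rightarrow> complex) \<Rightarrow> nat \<Rightarrow> complex" where
  "Pv x = comb (\<lambda>m. hinner x (e m))"

lemma Pv_l2: "l2 (Pv x)" by (simp add: Pv_def comb_l2)

lemma Pv_perp: "l2 x \<Longrightarrow> k \<in> {1..N} \<Longrightarrow> hinner (\<lambda>n. x n - Pv x n) (e k) = 0"
proof -
  assume x: "l2 x" and k: "k \<in> {1..N}"
  have "hinner (\<lambda>n. x n - Pv x n) (e k) = hinner x (e k) - hinner (Pv x) (e k)"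
    by (rule hinner_diff_left[OF x Pv_l2 e_l2[OF k]])
  thus ?thesis using k by (simp add: Pv_def hinner_comb_e)
qed

lemma Pv_perp_ran: "l2 x \<Longrightarrow> y \<in> ranH u \<Longrightarrow> hinner (\<lambda>n. x n - Pv x n) y = 0"
proof -
  assume x: "l2 x" and "y \<in> ranH u"
  then obtain c where y: "y = comb c" using ran_char by blast
  show ?thesis unfolding y using x
    by (simp add: hinner_comb_right l2_diff Pv_l2 Pv_perp)
qed

lemma proj_ran: "l2 x \<Longrightarrow> proj (ranH u) x = Pv x"
  unfolding proj_def
proof (rule the_equality)
  assume x: "l2 x"
  show "Pv x \<in> ranH u \<and> (\<forall>y\<in>ranH u. hinner (\<lambda>n. x n - Pv x n) y = 0)"
    using Pv_perp_ran[OF x] by (simp add: Pv_def comb_ran)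
  fix v assume v: "v \<in> ranH u \<and> (\<forall>y\<in>ranH u. hinner (\<lambda>n. x n - v n) y = 0)"
  then obtain c where c: "v = comb c" using ran_char by blast
  have "c k = hinner x (e k)" if k: "k \<in> {1..N}" for k
  proof -
    have "0 = hinner (\<lambda>n. x n - v n) (e k)" using v e_ran k by auto
    also have "\<dots> = hinner x (e k) - c k"
      using k x by (simp add: hinner_diff_left c comb_l2 e_l2 hinner_comb_e)
    finally show ?thesis by simp
  qed
  thus "v = Pv x" unfolding c Pv_def by (simp add: comb_eq_iff)
qed

lemma Pv_best_approx:
  assumes x: "l2 x" and y: "y \<in> ranH u"
  shows "hnorm (\<lambda>n. x n - Pv x n) \<le> hnorm (\<lambda>n. x n - y n)"
proof -
  define d where "d = (\<lambda>n. x n - Pv x n)"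
  define g where "g = (\<lambda>n. Pv x n - y n)"
  have dl: "l2 d" unfolding d_def by (intro l2_diff x Pv_l2)
  have gl: "l2 g" unfolding g_def by (intro l2_diff Pv_l2 ran_l2 y)
  have xy: "l2 (\<lambda>n. x n - y n)" by (intro l2_diff x ran_l2 y)
  have gr: "g \<in> ranH u"
  proof -
    obtain c where "y = comb c" using y ran_char by blast
    thus ?thesis using comb_lin[of _ 1 c] unfolding g_def Pv_def by (simp add: comb_ran)
  qed
  have dg: "hinner d g = 0" unfolding d_def by (rule Pv_perp_ran[OF x gr])
  have "(\<lambda>n. x n - y n) = (\<lambda>n. d n + g n)" by (simp add: d_def g_def fun_eq_iff)
  hence "hinner (\<lambda>n. x n - y n) (\<lambda>n. x n - y n) = hinner d d + hinner g g"
    by (simp only: pythag[OF dl gl dg])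
  hence "(hnorm (\<lambda>n. x n - y n))^2 = (hnorm d)^2 + (hnorm g)^2"
    by (simp only: hinner_self dl gl xy of_real_eq_iff flip: of_real_add)
  hence "(hnorm d)^2 \<le> (hnorm (\<lambda>n. x n - y n))^2" by simp
  thus ?thesis unfolding d_def[symmetric] by (rule power2_le_imp_le) (rule hnorm_nonneg[OF xy])
qed

lemma hclosure_ran: "hclosure (ranH u) = ranH u"
proof (intro equalityI subsetI)
  fix f assume "f \<in> ranH u"
  thus "f \<in> hclosure (ranH u)" unfolding hclosure_def
    using ran_l2[of f] hnorm_eq_0[OF l2_zero] by (auto simp: H2_def intro!: bexI[of _ f])
next
  fix f assume f: "f \<in> hclosure (ranH u)"
  hence fl: "l2 f" by (simp add: hclosure_def H2_def)
  have dl: "l2 (\<lambda>n. f n - Pv f n)" by (intro l2_diff fl Pv_l2)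
  have "hnorm (\<lambda>n. f n - Pv f n) = 0"
  proof (rule ccontr)
    assume "hnorm (\<lambda>n. f n - Pv f n) \<noteq> 0"
    hence "hnorm (\<lambda>n. f n - Pv f n) > 0" using hnorm_nonneg[OF dl] by simp
    then obtain y where "y \<in> ranH u" "hnorm (\<lambda>n. f n - y n) < hnorm (\<lambda>n. f n - Pv f n)"
      using f unfolding hclosure_def by blast
    thus False using Pv_best_approx[OF fl] by fastforce
  qed
  hence "f = Pv f" using hnorm_eq_0[OF dl] by (simp add: fun_eq_iff)
  thus "f \<in> ranH u" using comb_ran unfolding Pv_def by metis
qed

lemma Pu_eq: "l2 x \<Longrightarrow> Pu u x = Pv x"
  by (simp add: Pu_def hclosure_ran proj_ran)

lemma Pv_lin: "l2 x \<Longrightarrow> l2 y \<Longrightarrow> Pv (\<lambda>n. x n - c * y n) = (\<lambda>n. Pv x n - c * Pv y n)"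
proof -
  assume x: "l2 x" and y: "l2 y"
  have "hinner (\<lambda>n. x n - c * y n) (e m) = hinner x (e m) - c * hinner y (e m)" if m: "m \<in> {1..N}" for m
    using hinner_diff_left[OF x l2_scale[OF y] e_l2[OF m], of c] hinner_scale_left[OF y e_l2[OF m], of c]
    by simp
  hence "Pv (\<lambda>n. x n - c * y n) = comb (\<lambda>m. hinner x (e m) - c * hinner y (e m))"
    unfolding Pv_def by (simp add: comb_eq_iff)
  also have "\<dots> = (\<lambda>n. Pv x n - c * Pv y n)" unfolding Pv_def comb_lin ..
  finally show ?thesis .
qed

lemma Pv_scale: "l2 y \<Longrightarrow> Pv (\<lambda>n. c * y n) = (\<lambda>n. c * Pv y n)"
proof -
  assume y: "l2 y"
  have "Pv (\<lambda>n. c * y n) = comb (\<lambda>m. c * hinner y (e m))"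
    unfolding Pv_def by (simp add: comb_eq_iff hinner_scale_left[OF y e_l2])
  thus ?thesis unfolding Pv_def comb_scale .
qed

lemma Pv_HH: "l2 x \<Longrightarrow> Pv (H (H x)) = H (H (Pv x))"
proof -
  assume x: "l2 x"
  have "Pv (H (H x)) = comb (\<lambda>m. of_real (L m) * hinner x (e m))"
    unfolding Pv_def
  proof (subst comb_eq_iff, intro ballI)
    fix m assume m: "m \<in> {1..N}"
    have "hinner (H (H x)) (e m) = hinner x (H (H (e m)))" by (rule HH_selfadjoint[OF x e_l2[OF m]])
    thus "hinner (H (H x)) (e m) = of_real (L m) * hinner x (e m)"
      by (simp add: e_eig[OF m] hinner_scale_right e_l2[OF m] x)
  qed
  also have "\<dots> = H (H (Pv x))" by (simp add: Pv_def HH_comb)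
  finally show ?thesis .
qed

lemma eig_comb:
  assumes j: "j \<in> {1..N}" and eq: "H (H (comb c)) = (\<lambda>n. of_real (L j) * comb c n)"
  shows "comb c = (\<lambda>n. c j * e j n)"
proof -
  have "comb (\<lambda>m. of_real (L m) * c m) = comb (\<lambda>m. of_real (L j) * c m)"
    using eq by (simp add: HH_comb comb_scale)
  hence "\<forall>m\<in>{1..N}. of_real (L m) * c m = of_real (L j) * c m" by (simp add: comb_eq_iff)
  hence z: "c m = 0" if "m \<in> {1..N}" "m \<noteq> j" for m using L_inj[OF that(1) j] that by auto
  show ?thesis unfolding comb_def
    by (rule ext, rule sum_single) (use j z in auto)
qed

lemma eigsp_eq: "j \<in> {1..N} \<Longrightarrow> eigsp u (L j) = {v. \<exists>c. v = (\<lambda>n. c * e j n)}"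
proof (intro equalityI subsetI)
  fix v assume j: "j \<in> {1..N}" and "v \<in> eigsp u (L j)"
  hence v: "l2 v" "H (H v) = (\<lambda>n. of_real (L j) * v n)" by (auto simp: eigsp_def H2_def)
  have "v \<in> ranH u" using eig_in_ran[OF v(1) _ v(2)] L_pos[OF j] by simp
  then obtain c where c: "v = comb c" using ran_char by blast
  show "v \<in> {v. \<exists>c. v = (\<lambda>n. c * e j n)}" using eig_comb[OF j] v(2) c by auto
next
  fix v assume j: "j \<in> {1..N}" and "v \<in> {v. \<exists>c. v = (\<lambda>n. c * e j n)}"
  then obtain c where c: "v = (\<lambda>n. c * e j n)" by blast
  show "v \<in> eigsp u (L j)" unfolding eigsp_def H2_def c
    using j by (simp add: l2_scale e_l2 HH_scale e_eig algebra_simps)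
qed

text \<open>b_j = (1|e_j): the eigenprojection of 1 is b_j e_j, so nu_j = |b_j|.\<close>

definition b :: "nat \<Rightarrow> complex" where "b j = hinner one_h (e j)"

lemma e_hnorm: "j \<in> {1..N} \<Longrightarrow> hnorm (e j) = 1"
proof -
  assume j: "j \<in> {1..N}"
  have "of_real ((hnorm (e j))^2) = (1::complex)" using hinner_self[OF e_l2[OF j]] e_norm[OF j] by simp
  hence "(hnorm (e j))^2 = 1" by (metis of_real_eq_1_iff)
  thus ?thesis using hnorm_nonneg[OF e_l2[OF j]] by (simp add: power2_eq_1_iff)
qed

lemma nu_eq: "j \<in> {1..N} \<Longrightarrow> nu u lam j = cmod (b j)"
proof -
  assume j: "j \<in> {1..N}"
  have "proj (eigsp u (L j)) one_h = (\<lambda>n. b j * e j n)"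
    unfolding proj_def eigsp_eq[OF j]
  proof (rule the_equality)
    show "(\<lambda>n. b j * e j n) \<in> {v. \<exists>c. v = (\<lambda>n. c * e j n)} \<and>
      (\<forall>y\<in>{v. \<exists>c. v = (\<lambda>n. c * e j n)}. hinner (\<lambda>n. one_h n - b j * e j n) y = 0)"
      using j by (auto simp: hinner_scale_right hinner_diff_left l2_one l2_scale e_l2 hinner_scale_left e_norm b_def)
  next
    fix v assume v: "v \<in> {v. \<exists>c. v = (\<lambda>n. c * e j n)} \<and>
      (\<forall>y\<in>{v. \<exists>c. v = (\<lambda>n. c * e j n)}. hinner (\<lambda>n. one_h n - v n) y = 0)"
    then obtain c where c: "v = (\<lambda>n. c * e j n)" by blast
    have m: "(\<lambda>n. 1 * e j n) \<in> {v. \<exists>c. v = (\<lambda>n. c * e j n)}" by blast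
    have "hinner (\<lambda>n. one_h n - v n) (\<lambda>n. 1 * e j n) = 0" using v m by blast
    hence "0 = hinner (\<lambda>n. one_h n - v n) (\<lambda>n. 1 * e j n)" by simp
    also have "\<dots> = b j - c"
      using j by (simp add: c hinner_diff_left l2_one l2_scale e_l2 hinner_scale_left e_norm b_def)
    finally show "v = (\<lambda>n. b j * e j n)" using c by simp
  qed
  thus ?thesis unfolding nu_def L_def[symmetric] using j by (simp add: hnorm_scale e_l2 e_hnorm)
qed

text \<open>H_u e_j = alpha_j e_j with |alpha_j|^2 = lambda_j^2, since H_u commutes with H_u^2
  and the eigenspaces are lines.\<close>

definition \<alpha> :: "nat \<Rightarrow> complex" where "\<alpha> j = hinner (H (e j)) (e j)"

lemma He_eig: "j \<in> {1..N} \<Longrightarrow> H (e j) = (\<lambda>n. \<alpha> j * e j n)"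
proof -
  assume j: "j \<in> {1..N}"
  have r: "H (e j) \<in> ranH u" using e_l2[OF j] by (auto simp: ranH_def H2_def)
  define c where "c m = hinner (H (e j)) (e m)" for m
  have c: "H (e j) = comb c" unfolding c_def by (rule expand, rule ran_Vs[OF r])
  have "H (H (comb c)) = H (H (H (e j)))" by (simp add: c)
  also have "\<dots> = H (\<lambda>n. of_real (L j) * e j n)" by (simp add: e_eig[OF j])
  also have "\<dots> = (\<lambda>n. of_real (L j) * comb c n)" by (simp add: hankel_scale e_l2[OF j] c)
  finally have "comb c = (\<lambda>n. c j * e j n)" by (rule eig_comb[OF j])
  thus ?thesis by (simp add: c c_def \<alpha>_def)
qed

lemma alpha_sq: "j \<in> {1..N} \<Longrightarrow> cnj (\<alpha> j) * \<alpha> j = of_real (L j)"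
proof -
  assume j: "j \<in> {1..N}"
  have "(\<lambda>n. of_real (L j) * e j n) = H (H (e j))" by (simp add: e_eig[OF j])
  also have "\<dots> = (\<lambda>n. cnj (\<alpha> j) * (\<alpha> j * e j n))" by (simp add: He_eig[OF j] hankel_scale e_l2[OF j])
  finally have eq: "(\<lambda>n. of_real (L j) * e j n) = (\<lambda>n. (cnj (\<alpha> j) * \<alpha> j) * e j n)"
    by (simp add: mult.assoc)
  have "of_real (L j) = hinner (\<lambda>n. of_real (L j) * e j n) (e j)"
    using j by (simp add: hinner_scale_left e_l2 e_norm)
  also have "\<dots> = hinner (\<lambda>n. (cnj (\<alpha> j) * \<alpha> j) * e j n) (e j)" by (simp only: eq)
  also have "\<dots> = cnj (\<alpha> j) * \<alpha> j" using j by (simp add: hinner_scale_left e_l2 e_norm)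
  finally show ?thesis by simp
qed

definition a :: "nat \<Rightarrow> complex" where "a j = hinner u (e j)"

lemma u_ran: "u \<in> ranH u"
proof -
  have "u = H one_h" by (simp add: hankel_one)
  thus ?thesis unfolding ranH_def H2_def using l2_one by blast
qed

lemma u_comb: "u = comb a"
  unfolding a_def by (rule expand, rule ran_Vs[OF u_ran])

lemma a_eq: "j \<in> {1..N} \<Longrightarrow> a j = \<alpha> j * cnj (b j)"
proof -
  assume j: "j \<in> {1..N}"
  have "a j = hinner (H one_h) (e j)" by (simp add: a_def hankel_one)
  also have "\<dots> = hinner (H (e j)) one_h" by (rule hankel_sym[OF l2_one e_l2[OF j]])
  also have "\<dots> = \<alpha> j * hinner (e j) one_h" by (simp add: He_eig[OF j] hinner_scale_left e_l2[OF j] l2_one)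
  also have "hinner (e j) one_h = cnj (b j)" unfolding b_def by (rule hinner_cnj[OF l2_one e_l2[OF j]])
  finally show ?thesis .
qed

lemma a_sq: "j \<in> {1..N} \<Longrightarrow> (cmod (a j))^2 = L j * (cmod (b j))^2"
proof -
  assume j: "j \<in> {1..N}"
  have "complex_of_real ((cmod (\<alpha> j))^2) = \<alpha> j * cnj (\<alpha> j)" by (rule complex_norm_square)
  also have "\<dots> = of_real (L j)" using alpha_sq[OF j] by (simp add: mult.commute)
  finally have "complex_of_real ((cmod (\<alpha> j))^2) = of_real (L j)" .
  hence "(cmod (\<alpha> j))^2 = L j" using of_real_eq_iff by blast
  thus ?thesis by (simp add: a_eq[OF j] norm_mult power_mult_distrib)
qed

lemma Pv_one: "Pv one_h = comb b" by (simp add: Pv_def b_def[abs_def])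

text \<open>Since 1 is not in Ran H_u, its projection has norm < 1: sum_j nu_j^2 < 1.\<close>

lemma sum_cnj_sq: "(\<Sum>m=1..N. c m * cnj (c m)) = complex_of_real (\<Sum>m=1..N. (cmod (c m))^2)"
  by (simp only: of_real_sum complex_norm_square)

lemma b_sum: "(\<Sum>j=1..N. (cmod (b j))^2) < 1"
proof (rule ccontr)
  assume ge: "\<not> (\<Sum>j=1..N. (cmod (b j))^2) < 1"
  define d where "d = (\<lambda>n. one_h n - Pv one_h n)"
  have dl: "l2 d" unfolding d_def by (intro l2_diff l2_one Pv_l2)
  have dp: "hinner d (Pv one_h) = 0" unfolding d_def
    by (rule Pv_perp_ran[OF l2_one]) (simp add: Pv_def comb_ran)
  have "one_h = (\<lambda>n. d n + Pv one_h n)" by (simp add: d_def)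
  hence "(1::complex) = hinner (\<lambda>n. d n + Pv one_h n) (\<lambda>n. d n + Pv one_h n)"
    using hinner_one by simp
  also have "\<dots> = hinner d d + hinner (Pv one_h) (Pv one_h)" by (rule pythag[OF dl Pv_l2 dp])
  also have "\<dots> = of_real ((hnorm d)^2 + (\<Sum>m=1..N. (cmod (b m))^2))"
    by (simp only: hinner_self[OF dl] Pv_one hinner_comb_comb sum_cnj_sq of_real_add)
  finally have "(hnorm d)^2 + (\<Sum>m=1..N. (cmod (b m))^2) = 1"
    by (metis of_real_eq_1_iff)
  hence "(hnorm d)^2 \<le> 0" using ge by linarith
  hence "hnorm d = 0" by simp
  hence "d = (\<lambda>n. 0)" using hnorm_eq_0[OF dl] by simp
  hence "one_h = Pv one_h" by (simp add: d_def fun_eq_iff)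
  hence "one_h \<in> ranH u" using comb_ran by (metis Pv_one)
  thus False using not1 by simp
qed

lemma H2pow_eq: "k \<ge> 1 \<Longrightarrow> H2pow u k one_h = comb (\<lambda>m. of_real (L m ^ k) * b m)"
proof (induction k rule: dec_induct)
  case base
  have r: "H (H one_h) \<in> ranH u" unfolding ranH_def H2_def using hankel_l2[OF l2_one] by auto
  have "H (H one_h) = comb (\<lambda>m. hinner (H (H one_h)) (e m))" by (rule expand, rule ran_Vs[OF r])
  also have "\<dots> = comb (\<lambda>m. of_real (L m ^ 1) * b m)"
  proof (subst comb_eq_iff, intro ballI)
    fix m assume m: "m \<in> {1..N}"
    have "hinner (H (H one_h)) (e m) = hinner one_h (H (H (e m)))" by (rule HH_selfadjoint[OF l2_one e_l2[OF m]])
    also have "\<dots> = of_real (L m) * b m" by (simp add: e_eig[OF m] hinner_scale_right e_l2[OF m] l2_one b_def)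
    finally show "hinner (H (H one_h)) (e m) = of_real (L m ^ 1) * b m" by simp
  qed
  finally show ?case by (simp add: H2pow_def)
next
  case (step k)
  show ?case by (simp add: H2pow_Suc step.IH HH_comb mult.assoc)
qed

text \<open>Genericity forces every b_j to be nonzero: otherwise a monic polynomial p with
  p(0) = 0 vanishing at all lambda_i^2, i <> j, gives a vanishing combination
  sum_k p_k H_u^{2k} 1 = sum_m p(lambda_m^2) b_m e_m = 0 with p_N = 1.\<close>

lemma b_nz: "j \<in> {1..N} \<Longrightarrow> b j \<noteq> 0"
proof
  assume j: "j \<in> {1..N}" and bj: "b j = 0"
  obtain p :: "complex poly" where lcp: "coeff p N = 1" and polyp: "\<And>z. poly p z = (\<Sum>k=1..N. coeff p k * z^k)"
    and root: "\<And>i. i \<in> {1..N} - {j} \<Longrightarrow> poly p (of_real (L i)) = 0"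
    using poly_vanishing_off[OF N1 j, of "\<lambda>i. of_real (L i)"] by blast
  have "(\<lambda>n. \<Sum>k=1..N. coeff p k * H2pow u k one_h n) = (\<lambda>n. \<Sum>k=1..N. coeff p k * comb (\<lambda>m. of_real (L m ^ k) * b m) n)"
    by (intro ext sum.cong refl) (simp add: H2pow_eq)
  also have "\<dots> = comb (\<lambda>m. \<Sum>k=1..N. coeff p k * (of_real (L m ^ k) * b m))" by (rule comb_sum)
  also have "\<dots> = comb (\<lambda>m. poly p (of_real (L m)) * b m)"
    by (simp add: polyp sum_distrib_right mult.assoc)
  also have "\<dots> = (\<lambda>n. 0)"
    unfolding comb_eq_zero_iff using root bj by (metis Diff_iff mult_eq_0_iff singletonD)
  finally have "\<forall>k\<in>{1..N}. coeff p k = 0" using indep by blast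
  thus False using lcp N1 by auto
qed

lemma a_nz: "j \<in> {1..N} \<Longrightarrow> a j \<noteq> 0"
  using a_sq[of j] b_nz[of j] L_pos[of j] by auto

text \<open>The weights w_j = lambda_j^2 nu_j^2 = |a_j|^2 are positive and sum_j w_j/lambda_j^2 =
  sum_j nu_j^2 < 1, so the secular analysis applies: its roots sig_1 > ... > sig_N are
  interlaced with the lambda_j^2.\<close>

definition weight :: "nat \<Rightarrow> real" where "weight j = L j * (cmod (b j))^2"

lemma weight_eq_a: "j \<in> {1..N} \<Longrightarrow> weight j = (cmod (a j))^2"
  by (simp add: weight_def a_sq)

lemma sec_inst: "secular N L weight"
proof
  show "1 \<le> N" using N1 .
  show "\<forall>j\<in>{1..N}. 0 < L j" using L_pos by blast
  show "\<forall>j\<in>{1..<N}. L (Suc j) < L j" using L_dec .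
  show "\<forall>j\<in>{1..N}. 0 < weight j"
  proof
    fix j assume j: "j \<in> {1..N}"
    have "L j > 0" "b j \<noteq> 0" using L_pos[OF j] b_nz[OF j] by auto
    thus "0 < weight j" by (simp add: weight_def)
  qed
  have "(\<Sum>j=1..N. weight j / L j) = (\<Sum>j=1..N. (cmod (b j))^2)"
  proof (intro sum.cong refl)
    fix j assume j: "j \<in> {1..N}"
    have "L j > 0" using L_pos[OF j] .
    thus "weight j / L j = (cmod (b j))^2" by (simp add: weight_def)
  qed
  thus "(\<Sum>j=1..N. weight j / L j) < 1" using b_sum by simp
qed

abbreviation Fs :: "real \<Rightarrow> real" where "Fs \<equiv> secular.F N L weight"

lemma Fs_def': "Fs s = (\<Sum>j=1..N. weight j / (L j - s))"
  by (simp add: secular.F_def[OF sec_inst])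

definition sig :: "nat \<Rightarrow> real" where
  "sig = (SOME \<sigma>. (\<forall>m\<in>{1..N}. 0 < \<sigma> m \<and> \<sigma> m < L m) \<and> (\<forall>m\<in>{1..<N}. L (Suc m) < \<sigma> m) \<and>
     {s. (\<forall>j\<in>{1..N}. s \<noteq> L j) \<and> Fs s = 1} = \<sigma> ` {1..N})"

lemma sig_props: "(\<forall>m\<in>{1..N}. 0 < sig m \<and> sig m < L m) \<and> (\<forall>m\<in>{1..<N}. L (Suc m) < sig m) \<and>
     {s. (\<forall>j\<in>{1..N}. s \<noteq> L j) \<and> Fs s = 1} = sig ` {1..N}"
  using secular.secular_roots[OF sec_inst] unfolding sig_def by (rule someI_ex)

lemma sig_pos: "m \<in> {1..N} \<Longrightarrow> 0 < sig m" using sig_props by blast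
lemma sig_lt: "m \<in> {1..N} \<Longrightarrow> sig m < L m" using sig_props by blast
lemma sig_gt: "m \<in> {1..<N} \<Longrightarrow> L (Suc m) < sig m" using sig_props by blast
lemma sig_set: "{s. (\<forall>j\<in>{1..N}. s \<noteq> L j) \<and> Fs s = 1} = sig ` {1..N}" using sig_props by blast

lemma sig_notL: "m \<in> {1..N} \<Longrightarrow> \<forall>j\<in>{1..N}. sig m \<noteq> L j" using sig_set by blast

lemma sig_F: "m \<in> {1..N} \<Longrightarrow> Fs (sig m) = 1" using sig_set by blast

lemma sig_ne: "m \<in> {1..N} \<Longrightarrow> j \<in> {1..N} \<Longrightarrow> L j - sig m \<noteq> 0"
  using sig_notL[of m] by force

lemma sig_inj: "m \<in> {1..N} \<Longrightarrow> k \<in> {1..N} \<Longrightarrow> sig m = sig k \<Longrightarrow> m = k"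
proof (rule ccontr)
  assume mk: "m \<in> {1..N}" "k \<in> {1..N}" "sig m = sig k" "m \<noteq> k"
  have lt: "sig j < sig i" if "i \<in> {1..N}" "j \<in> {1..N}" "i < j" for i j
  proof -
    have "sig j < L j" using sig_lt that by blast
    also have "L j \<le> L (Suc i)" using secular.L_mono_le[OF sec_inst, of "Suc i" j] that by auto
    also have "L (Suc i) < sig i" using sig_gt[of i] that by auto
    finally show ?thesis .
  qed
  show False using lt[of m k] lt[of k m] mk by (cases "m < k") auto
qed

lemma sum_a_F: "\<forall>j\<in>{1..N}. s \<noteq> L j \<Longrightarrow>
   (\<Sum>i=1..N. a i / of_real (L i - s) * cnj (a i)) = complex_of_real (Fs s)"
proof -
  assume sL: "\<forall>j\<in>{1..N}. s \<noteq> L j"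
  have "(\<Sum>i=1..N. a i / of_real (L i - s) * cnj (a i)) = (\<Sum>i=1..N. complex_of_real (weight i / (L i - s)))"
  proof (intro sum.cong refl)
    fix i assume i: "i \<in> {1..N}"
    have "a i / of_real (L i - s) * cnj (a i) = (a i * cnj (a i)) / of_real (L i - s)" by simp
    also have "\<dots> = complex_of_real ((cmod (a i))^2) / of_real (L i - s)" by (simp only: complex_norm_square)
    also have "\<dots> = complex_of_real (weight i / (L i - s))" by (simp only: weight_eq_a[OF i] of_real_divide)
    finally show "a i / of_real (L i - s) * cnj (a i) = complex_of_real (weight i / (L i - s))" .
  qed
  also have "\<dots> = complex_of_real (Fs s)" by (simp add: Fs_def')
  finally show ?thesis .
qed

definition inner_u :: "(nat \<Rightarrow> complex) \<Rightarrow> complex" where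
  "inner_u c = (\<Sum>i=1..N. c i * cnj (a i))"

lemma hinner_comb_u: "hinner (comb c) u = inner_u c"
proof -
  have "hinner (comb c) u = hinner (comb c) (comb a)" by (metis u_comb)
  thus ?thesis by (simp add: inner_u_def hinner_comb_comb)
qed

lemma KK_comb: "Kop u (Kop u (comb c)) = comb (\<lambda>m. of_real (L m) * c m - inner_u c * a m)"
proof -
  have "Kop u (Kop u (comb c)) = (\<lambda>k. H (H (comb c)) k - hinner (comb c) u * u k)"
    by (rule KK[OF comb_l2])
  also have "\<dots> = (\<lambda>k. comb (\<lambda>m. of_real (L m) * c m) k - inner_u c * comb a k)"
    by (simp only: HH_comb hinner_comb_u flip: u_comb)
  also have "\<dots> = comb (\<lambda>m. of_real (L m) * c m - inner_u c * a m)"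
    by (rule comb_lin)
  finally show ?thesis .
qed

lemma KK_comb_eig:
  "Kop u (Kop u (comb c)) = (\<lambda>n. \<sigma> * comb c n) \<longleftrightarrow>
     (\<forall>m\<in>{1..N}. (of_real (L m) - \<sigma>) * c m = inner_u c * a m)"
proof -
  have "Kop u (Kop u (comb c)) = (\<lambda>n. \<sigma> * comb c n) \<longleftrightarrow>
     comb (\<lambda>m. of_real (L m) * c m - inner_u c * a m) = comb (\<lambda>m. \<sigma> * c m)"
    by (simp add: KK_comb comb_scale)
  also have "\<dots> \<longleftrightarrow> (\<forall>m\<in>{1..N}. (of_real (L m) - \<sigma>) * c m = inner_u c * a m)"
    by (simp add: comb_eq_iff algebra_simps)
  finally show ?thesis .
qed

text \<open>Away from the lambda_j^2, H_u^2 - sigma is injective; so the resolvent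
  resolv u s v is the unique solution, explicitly resolv_comb s c = sum_m c_m/(lambda_m^2 - s) e_m
  for v = comb c.\<close>

lemma HH_eig_zero:
  assumes "s > 0" "\<forall>j\<in>{1..N}. s \<noteq> L j" "l2 d" "H (H d) = (\<lambda>n. of_real s * d n)"
  shows "d = (\<lambda>n. 0)"
proof -
  have "d \<in> ranH u" using eig_in_ran[OF assms(3) _ assms(4)] assms(1) by simp
  then obtain c where c: "d = comb c" using ran_char by blast
  have "comb (\<lambda>m. of_real (L m) * c m) = comb (\<lambda>m. of_real s * c m)"
    using assms(4) by (simp add: c HH_comb comb_scale)
  hence "\<forall>m\<in>{1..N}. of_real (L m) * c m = of_real s * c m" by (simp add: comb_eq_iff)
  hence "\<forall>m\<in>{1..N}. c m = 0" using assms(2) by auto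
  thus ?thesis by (simp add: c comb_eq_zero_iff)
qed

lemma resolv_unique:
  assumes s: "s > 0" "\<forall>j\<in>{1..N}. s \<noteq> L j" and h: "l2 h"
    and eq: "(\<lambda>n. H (H h) n - of_real s * h n) = v"
  shows "resolv u s v = h"
  unfolding resolv_def
proof (rule the_equality)
  show "h \<in> H2 \<and> (\<lambda>n. H (H h) n - of_real s * h n) = v" using h eq by (simp add: H2_def)
next
  fix h' assume h': "h' \<in> H2 \<and> (\<lambda>n. H (H h') n - of_real s * h' n) = v"
  hence l: "l2 h'" by (simp add: H2_def)
  define d where "d = (\<lambda>n. h' n - h n)"
  have dl: "l2 d" unfolding d_def by (intro l2_diff l h)
  have "H (H d) = (\<lambda>n. H (H h') n - H (H h) n)" unfolding d_def by (rule HH_diff[OF l h])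
  also have "\<dots> = (\<lambda>n. of_real s * d n)"
  proof
    fix n
    have "H (H h') n - of_real s * h' n = H (H h) n - of_real s * h n"
      using h' eq by (metis (no_types, lifting))
    thus "H (H h') n - H (H h) n = of_real s * d n" by (simp add: d_def algebra_simps)
  qed
  finally have "d = (\<lambda>n. 0)" by (intro HH_eig_zero[OF s dl])
  thus "h' = h" by (simp add: d_def fun_eq_iff)
qed

definition resolv_comb :: "real \<Rightarrow> (nat \<Rightarrow> complex) \<Rightarrow> nat \<Rightarrow> complex" where
  "resolv_comb s c = comb (\<lambda>m. c m / of_real (L m - s))"

lemma resolv_comb_solves:
  assumes "\<forall>j\<in>{1..N}. s \<noteq> L j"
  shows "(\<lambda>n. H (H (resolv_comb s c)) n - of_real s * resolv_comb s c n) = comb c"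
proof -
  have "(\<lambda>n. H (H (resolv_comb s c)) n - of_real s * resolv_comb s c n)
      = comb (\<lambda>m. of_real (L m) * (c m / of_real (L m - s)) - of_real s * (c m / of_real (L m - s)))"
    unfolding resolv_comb_def by (simp only: HH_comb comb_lin)
  also have "\<dots> = comb c"
  proof (subst comb_eq_iff, intro ballI)
    fix m assume m: "m \<in> {1..N}"
    define d where "d = complex_of_real (L m - s)"
    have d: "d \<noteq> 0" using assms m by (auto simp: d_def)
    have "of_real (L m) * (c m / d) - of_real s * (c m / d) = d * c m / d"
      by (simp add: d_def algebra_simps diff_divide_distrib)
    also have "\<dots> = c m" using d by simp
    finally show "of_real (L m) * (c m / of_real (L m - s)) - of_real s * (c m / of_real (L m - s)) = c m"
      by (simp add: d_def)
  qed
  finally show ?thesis .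
qed

lemma resolv_eq_comb:
  assumes "s > 0" "\<forall>j\<in>{1..N}. s \<noteq> L j"
  shows "resolv u s (comb c) = resolv_comb s c"
  by (rule resolv_unique[OF assms _ resolv_comb_solves[OF assms(2)]]) (simp add: resolv_comb_def comb_l2)

text \<open>The secular
  equation F(sig_m) = 1 says exactly that inner_u (gcoef m) = (g_m|u) = 1, which makes g_m an
  eigenvector of K_u^2 for sig_m; every such eigenvector is a multiple of g_m.\<close>

definition g :: "nat \<Rightarrow> nat \<Rightarrow> complex" where "g m = resolv_comb (sig m) a"

definition gcoef :: "nat \<Rightarrow> nat \<Rightarrow> complex" where "gcoef m = (\<lambda>i. a i / of_real (L i - sig m))"

lemma g_comb: "g m = comb (gcoef m)" by (simp add: g_def resolv_comb_def gcoef_def)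

lemma g_l2: "l2 (g m)" by (simp add: g_comb comb_l2)

lemma g_ran: "g m \<in> ranH u" by (simp add: g_comb comb_ran)

lemma resolv_g: "m \<in> {1..N} \<Longrightarrow> resolv u (sig m) u = g m"
proof -
  assume m: "m \<in> {1..N}"
  have "resolv u (sig m) u = resolv u (sig m) (comb a)" by (simp flip: u_comb)
  also have "\<dots> = g m" unfolding g_def by (rule resolv_eq_comb[OF sig_pos[OF m] sig_notL[OF m]])
  finally show ?thesis .
qed

lemma inner_u_gc: "m \<in> {1..N} \<Longrightarrow> inner_u (gcoef m) = 1"
  unfolding inner_u_def gcoef_def using sum_a_F[OF sig_notL] sig_F by simp

lemma g_eig: "m \<in> {1..N} \<Longrightarrow> Kop u (Kop u (g m)) = (\<lambda>n. of_real (sig m) * g m n)"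
proof -
  assume m: "m \<in> {1..N}"
  show ?thesis unfolding g_comb KK_comb_eig
  proof
    fix j assume j: "j \<in> {1..N}"
    have "complex_of_real (L j - sig m) \<noteq> 0" using sig_ne[OF m j] by simp
    thus "(of_real (L j) - of_real (sig m)) * gcoef m j = inner_u (gcoef m) * a j"
      by (subst inner_u_gc[OF m]) (simp add: gcoef_def)
  qed
qed

lemma hinner_u_g: "m \<in> {1..N} \<Longrightarrow> hinner u (g m) = 1"
proof -
  assume m: "m \<in> {1..N}"
  have "hinner u (g m) = hinner (comb a) (comb (gcoef m))" by (simp flip: u_comb add: g_comb)
  also have "\<dots> = (\<Sum>i=1..N. a i * cnj (gcoef m i))" by (rule hinner_comb_comb)
  also have "\<dots> = cnj (\<Sum>i=1..N. a i / of_real (L i - sig m) * cnj (a i))"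
    by (simp add: gcoef_def mult.commute)
  also have "\<dots> = 1" using sum_a_F[OF sig_notL[OF m]] sig_F[OF m] by simp
  finally show ?thesis .
qed

lemma g_nz: "m \<in> {1..N} \<Longrightarrow> g m \<noteq> (\<lambda>n. 0)"
proof
  assume m: "m \<in> {1..N}" and "g m = (\<lambda>n. 0)"
  hence "gcoef m 1 = 0" using comb_eq_zero_iff[of "gcoef m"] N1 by (simp add: g_comb)
  moreover have "complex_of_real (L 1 - sig m) \<noteq> 0" using sig_ne[OF m, of 1] N1 by auto
  ultimately show False using a_nz[of 1] N1 by (simp add: gcoef_def)
qed

lemma g_simple:
  assumes m: "m \<in> {1..N}" and h: "h \<in> ranH u"
    and eq: "Kop u (Kop u h) = (\<lambda>n. of_real (sig m) * h n)"
  shows "\<exists>c. h = (\<lambda>n. c * g m n)"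
proof -
  obtain c where c: "h = comb c" using h ran_char by blast
  have E: "\<forall>j\<in>{1..N}. (of_real (L j) - of_real (sig m)) * c j = inner_u c * a j"
    using eq unfolding c KK_comb_eig .
  have "comb c = comb (\<lambda>j. inner_u c * gcoef m j)"
  proof (subst comb_eq_iff, intro ballI)
    fix j assume j: "j \<in> {1..N}"
    have d: "complex_of_real (L j) - of_real (sig m) \<noteq> 0" using sig_ne[OF m j] by simp
    have "c j = inner_u c * a j / (of_real (L j) - of_real (sig m))" using E j d by (simp add: field_simps)
    thus "c j = inner_u c * gcoef m j" by (simp add: gcoef_def)
  qed
  hence "h = (\<lambda>n. inner_u c * g m n)" by (simp add: c g_comb comb_scale[symmetric])
  thus ?thesis by blast
qed

text \<open>Orthogonality of g_m and g_k: by partial fractions (g_m|g_k) is a multiple of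
  F(sig_m) - F(sig_k) = 0.\<close>

lemma g_orth:
  assumes m: "m \<in> {1..N}" and k: "k \<in> {1..N}" and mk: "m \<noteq> k"
  shows "hinner (g m) (g k) = 0"
proof -
  have sne: "sig m \<noteq> sig k" using sig_inj m k mk by blast
  have "hinner (g m) (g k) = (\<Sum>i=1..N. gcoef m i * cnj (gcoef k i))" by (simp add: g_comb hinner_comb_comb)
  also have "\<dots> = (\<Sum>i=1..N. complex_of_real ((weight i / (L i - sig m) - weight i / (L i - sig k)) / (sig m - sig k)))"
  proof (intro sum.cong refl)
    fix i assume i: "i \<in> {1..N}"
    have d1: "L i - sig m \<noteq> 0" and d2: "L i - sig k \<noteq> 0" using sig_ne m k i by auto
    have "gcoef m i * cnj (gcoef k i) = (a i * cnj (a i)) / (of_real (L i - sig m) * of_real (L i - sig k))"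
      by (simp add: gcoef_def)
    also have "\<dots> = complex_of_real ((cmod (a i))^2 / ((L i - sig m) * (L i - sig k)))"
      by (simp only: complex_norm_square of_real_divide of_real_mult)
    also have "(cmod (a i))^2 / ((L i - sig m) * (L i - sig k)) = (weight i / (L i - sig m) - weight i / (L i - sig k)) / (sig m - sig k)"
      using partial_fractions[OF d1 d2 sne, of "(cmod (a i))^2"] by (simp add: weight_eq_a[OF i])
    finally show "gcoef m i * cnj (gcoef k i) = complex_of_real ((weight i / (L i - sig m) - weight i / (L i - sig k)) / (sig m - sig k))" .
  qed
  also have "\<dots> = complex_of_real (\<Sum>i=1..N. (weight i / (L i - sig m) - weight i / (L i - sig k)) / (sig m - sig k))"
    by (simp only: of_real_sum)
  also have "(\<Sum>i=1..N. (weight i / (L i - sig m) - weight i / (L i - sig k)) / (sig m - sig k)) = (Fs (sig m) - Fs (sig k)) / (sig m - sig k)"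
    by (simp add: Fs_def' sum_subtractf sum_divide_distrib[symmetric])
  also have "\<dots> = 0" using sig_F m k by simp
  finally show ?thesis by simp
qed

text \<open>An eigenvector comb c of K_u^2 has inner_u c <> 0 (otherwise it would be a multiple of
  some e_j, while a_j <> 0); hence its eigenvalue avoids the lambda_j^2 and, dividing out
  inner_u c, satisfies the complex secular equation.\<close>

lemma KK_eigvec_inner_u_nz:
  assumes nz: "comb c \<noteq> (\<lambda>n. 0)"
    and E: "\<forall>j\<in>{1..N}. (of_real (L j) - \<sigma>) * c j = inner_u c * a j"
  shows "inner_u c \<noteq> 0"
proof
  assume t0: "inner_u c = 0"
  obtain j0 where j0: "j0 \<in> {1..N}" "c j0 \<noteq> 0" using nz comb_eq_zero_iff by blast
  have "(of_real (L j0) - \<sigma>) * c j0 = 0" using E j0 t0 by auto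
  hence s: "\<sigma> = of_real (L j0)" using j0 by simp
  have z: "c j = 0" if "j \<in> {1..N}" "j \<noteq> j0" for j
  proof -
    have "(of_real (L j) - of_real (L j0)) * c j = 0" using E that t0 s by auto
    moreover have "L j \<noteq> L j0" using L_inj that j0 by blast
    ultimately show ?thesis by simp
  qed
  have "(\<Sum>i=1..N. c i * cnj (a i)) = c j0 * cnj (a j0)"
    by (rule sum_single) (use j0 z in auto)
  hence "inner_u c = c j0 * cnj (a j0)" by (simp only: inner_u_def[of c])
  thus False using t0 j0 a_nz[OF j0(1)] by simp
qed

lemma KK_eigvec_secular:
  assumes h: "h \<in> ranH u" "h \<noteq> (\<lambda>n. 0)" "Kop u (Kop u h) = (\<lambda>n. \<sigma> * h n)"
  shows "\<forall>j\<in>{1..N}. \<sigma> \<noteq> of_real (L j)"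
    and "(\<Sum>j=1..N. of_real (weight j) / (of_real (L j) - \<sigma>)) = (1::complex)"
proof -
  obtain c where c: "h = comb c" using h(1) ran_char by blast
  have E: "\<forall>j\<in>{1..N}. (of_real (L j) - \<sigma>) * c j = inner_u c * a j"
    using h(3) unfolding c KK_comb_eig .
  have tne: "inner_u c \<noteq> 0" using KK_eigvec_inner_u_nz[OF _ E] h(2) c by blast
  show sL: "\<forall>j\<in>{1..N}. \<sigma> \<noteq> of_real (L j)"
  proof (intro ballI notI)
    fix j assume j: "j \<in> {1..N}" and sj: "\<sigma> = of_real (L j)"
    have "(of_real (L j) - \<sigma>) * c j = inner_u c * a j" using E j by blast
    hence "inner_u c * a j = 0" using sj by simp
    thus False using tne a_nz[OF j] by simp
  qed
  have cj: "c j = inner_u c * a j / (of_real (L j) - \<sigma>)" if j: "j \<in> {1..N}" for j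
  proof -
    have "of_real (L j) - \<sigma> \<noteq> 0" using sL j by auto
    thus ?thesis using E j by (simp add: field_simps)
  qed
  have "(\<Sum>j=1..N. c j * cnj (a j)) = (\<Sum>j=1..N. inner_u c * a j / (of_real (L j) - \<sigma>) * cnj (a j))"
    by (intro sum.cong refl) (simp add: cj)
  hence "inner_u c = (\<Sum>j=1..N. inner_u c * a j / (of_real (L j) - \<sigma>) * cnj (a j))"
    by (simp only: inner_u_def[of c])
  also have "\<dots> = inner_u c * (\<Sum>j=1..N. of_real (weight j) / (of_real (L j) - \<sigma>))"
    unfolding sum_distrib_left
  proof (intro sum.cong refl)
    fix j assume j: "j \<in> {1..N}"
    have "a j * cnj (a j) = of_real (weight j)" by (simp only: weight_eq_a[OF j] complex_norm_square)
    thus "inner_u c * a j / (of_real (L j) - \<sigma>) * cnj (a j) = inner_u c * (of_real (weight j) / (of_real (L j) - \<sigma>))"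
      by (simp add: field_simps)
  qed
  finally show "(\<Sum>j=1..N. of_real (weight j) / (of_real (L j) - \<sigma>)) = (1::complex)"
    using tne by (metis mult_cancel_left1)
qed

text \<open>A complex solution of the secular equation is real: its imaginary part multiplies
  the positive quantity sum_j w_j/|lambda_j^2 - sigma|^2.  So it is one of the sig_m.\<close>

lemma secular_root_real:
  assumes sL: "\<forall>j\<in>{1..N}. \<sigma> \<noteq> of_real (L j)"
    and S: "(\<Sum>j=1..N. of_real (weight j) / (of_real (L j) - \<sigma>)) = (1::complex)"
  shows "\<sigma> \<in> (\<lambda>m. complex_of_real (sig m)) ` {1..N}"
proof -
  have "Im \<sigma> * (\<Sum>j=1..N. weight j / (cmod (of_real (L j) - \<sigma>))^2) = Im (\<Sum>j=1..N. of_real (weight j) / (of_real (L j) - \<sigma>))"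
    by (simp add: Im_sum Im_real_div sum_distrib_left algebra_simps)
  also have "\<dots> = 0" using S by simp
  finally have im0: "Im \<sigma> * (\<Sum>j=1..N. weight j / (cmod (of_real (L j) - \<sigma>))^2) = 0" .
  have pos: "(\<Sum>j=1..N. weight j / (cmod (of_real (L j) - \<sigma>))^2) > 0"
  proof (rule sum_pos)
    show "finite {1..N}" "{1..N} \<noteq> {}" using N1 by auto
    fix j assume j: "j \<in> {1..N}"
    have "weight j > 0" using secular.wpos[OF sec_inst] j by blast
    moreover have "of_real (L j) - \<sigma> \<noteq> 0" using sL j by auto
    ultimately show "weight j / (cmod (of_real (L j) - \<sigma>))^2 > 0" by simp
  qed
  have imz: "Im \<sigma> = 0" using im0 pos by simp
  define x where "x = Re \<sigma>"
  have sx: "\<sigma> = of_real x" using imz by (simp add: x_def complex_eq_iff)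
  have xL: "\<forall>j\<in>{1..N}. x \<noteq> L j" using sL sx by auto
  have "complex_of_real (Fs x) = (\<Sum>j=1..N. of_real (weight j) / (of_real (L j) - \<sigma>))"
    by (simp add: Fs_def' sx)
  hence "Fs x = 1" using S by simp
  hence "x \<in> sig ` {1..N}" using sig_set xL by blast
  thus "\<sigma> \<in> (\<lambda>m. complex_of_real (sig m)) ` {1..N}" using sx by blast
qed

lemma eigset:
  "{\<sigma>::complex. \<exists>h\<in>ranH u. h \<noteq> (\<lambda>n. 0) \<and> Kop u (Kop u h) = (\<lambda>n. \<sigma> * h n)}
     = (\<lambda>m. complex_of_real (sig m)) ` {1..N}"
proof (intro equalityI subsetI)
  fix \<sigma> assume "\<sigma> \<in> (\<lambda>m. complex_of_real (sig m)) ` {1..N}"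
  then obtain m where m: "m \<in> {1..N}" "\<sigma> = of_real (sig m)" by blast
  show "\<sigma> \<in> {\<sigma>::complex. \<exists>h\<in>ranH u. h \<noteq> (\<lambda>n. 0) \<and> Kop u (Kop u h) = (\<lambda>n. \<sigma> * h n)}"
    using g_ran g_nz[OF m(1)] g_eig[OF m(1)] m(2) by blast
next
  fix \<sigma> assume "\<sigma> \<in> {\<sigma>::complex. \<exists>h\<in>ranH u. h \<noteq> (\<lambda>n. 0) \<and> Kop u (Kop u h) = (\<lambda>n. \<sigma> * h n)}"
  then obtain h where h: "h \<in> ranH u" "h \<noteq> (\<lambda>n. 0)" "Kop u (Kop u h) = (\<lambda>n. \<sigma> * h n)" by blast
  show "\<sigma> \<in> (\<lambda>m. complex_of_real (sig m)) ` {1..N}"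
    by (rule secular_root_real[OF KK_eigvec_secular[OF h]])
qed

lemma kernel: "h \<in> ranH u \<Longrightarrow> Kop u (Kop u h) = (\<lambda>n. 0) \<Longrightarrow> h = (\<lambda>n. 0)"
proof (rule ccontr)
  assume h: "h \<in> ranH u" "Kop u (Kop u h) = (\<lambda>n. 0)" "h \<noteq> (\<lambda>n. 0)"
  hence "0 \<in> {\<sigma>::complex. \<exists>h\<in>ranH u. h \<noteq> (\<lambda>n. 0) \<and> Kop u (Kop u h) = (\<lambda>n. \<sigma> * h n)}" by auto
  then obtain m where "m \<in> {1..N}" "0 = complex_of_real (sig m)" unfolding eigset by blast
  thus False using sig_pos by force
qed

lemma g_span: "h \<in> ranH u \<Longrightarrow> \<exists>c. h = (\<lambda>n. \<Sum>m=1..N. c m * g m n)"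
  by (rule orth_family_spans_Vs) (auto simp: ran_Vs g_ran g_nz g_orth)

text \<open>K_u commutes with K_u^2 and the eigenspaces are lines, so K_u g_m = kappa_m g_m with
  |kappa_m|^2 = sig_m; put mu_m = sqrt sig_m.  Rotating g_m by half the phase of kappa_m and
  normalising gives an orthonormal basis f_m with K_u f_m = mu_m f_m.\<close>

lemma Kg_exists: "m \<in> {1..N} \<Longrightarrow> \<exists>\<kappa>. Kop u (g m) = (\<lambda>n. \<kappa> * g m n)"
proof -
  assume m: "m \<in> {1..N}"
  have "Kop u (Kop u (Kop u (g m))) = Kop u (\<lambda>n. of_real (sig m) * g m n)" by (simp add: g_eig[OF m])
  also have "\<dots> = (\<lambda>n. of_real (sig m) * Kop u (g m) n)" by (simp add: Kop_scale g_l2)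
  finally show ?thesis using g_simple[OF m Kop_ran[OF g_l2]] by blast
qed

definition \<kappa> :: "nat \<Rightarrow> complex" where "\<kappa> m = (SOME k. Kop u (g m) = (\<lambda>n. k * g m n))"

lemma Kg: "m \<in> {1..N} \<Longrightarrow> Kop u (g m) = (\<lambda>n. \<kappa> m * g m n)"
proof -
  assume m: "m \<in> {1..N}"
  from Kg_exists[OF m] show ?thesis unfolding \<kappa>_def by (rule someI_ex)
qed

lemma kappa_sq: "m \<in> {1..N} \<Longrightarrow> cnj (\<kappa> m) * \<kappa> m = of_real (sig m)"
proof -
  assume m: "m \<in> {1..N}"
  have "(\<lambda>n. of_real (sig m) * g m n) = Kop u (Kop u (g m))" by (simp add: g_eig[OF m])
  also have "\<dots> = (\<lambda>n. (cnj (\<kappa> m) * \<kappa> m) * g m n)" by (simp add: Kg[OF m] Kop_scale g_l2 mult.assoc)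
  finally show ?thesis by (intro scal_cancel[OF g_nz[OF m]]) simp
qed

definition mu :: "nat \<Rightarrow> real" where "mu m = sqrt (sig m)"

lemma mu_pos: "m \<in> {1..N} \<Longrightarrow> mu m > 0" by (simp add: mu_def sig_pos)

lemma mu_sq: "m \<in> {1..N} \<Longrightarrow> (mu m)^2 = sig m" by (simp add: mu_def sig_pos less_imp_le)

lemma cmod_kappa: "m \<in> {1..N} \<Longrightarrow> cmod (\<kappa> m) = mu m"
proof -
  assume m: "m \<in> {1..N}"
  have "complex_of_real ((cmod (\<kappa> m))^2) = of_real (sig m)"
    using kappa_sq[OF m] by (simp only: complex_norm_square mult.commute)
  hence "(cmod (\<kappa> m))^2 = sig m" using of_real_eq_iff by blast
  thus ?thesis unfolding mu_def by (simp add: real_sqrt_unique)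
qed

definition \<tau> :: "nat \<Rightarrow> complex" where
  "\<tau> m = cis (Arg (\<kappa> m) / 2) / of_real (hnorm (g m))"

definition onb :: "nat \<Rightarrow> nat \<Rightarrow> complex" where "onb m = (\<lambda>n. \<tau> m * g m n)"

lemma tau_nz: "m \<in> {1..N} \<Longrightarrow> \<tau> m \<noteq> 0"
proof -
  assume m: "m \<in> {1..N}"
  have "hnorm (g m) > 0" using hnorm_pos[OF g_l2 g_nz[OF m]] .
  thus ?thesis by (simp add: \<tau>_def)
qed

lemma kappa_tau: "m \<in> {1..N} \<Longrightarrow> cnj (\<tau> m) * \<kappa> m = of_real (mu m) * \<tau> m"
proof -
  assume m: "m \<in> {1..N}"
  have k: "\<kappa> m = of_real (mu m) * cis (Arg (\<kappa> m))"
    using rcis_cmod_Arg[of "\<kappa> m"] cmod_kappa[OF m] by (simp add: rcis_def)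
  have "cnj (\<tau> m) * \<kappa> m = of_real (mu m) * (cis (- (Arg (\<kappa> m) / 2)) * cis (Arg (\<kappa> m))) / of_real (hnorm (g m))"
    by (subst k) (simp add: \<tau>_def cis_cnj)
  also have "cis (- (Arg (\<kappa> m) / 2)) * cis (Arg (\<kappa> m)) = cis (Arg (\<kappa> m) / 2)"
    by (simp add: cis_mult)
  finally show ?thesis by (simp add: \<tau>_def)
qed

lemma onb_is_K_onb: "K_onb N u mu onb"
  unfolding K_onb_def
proof (intro conjI ballI)
  fix m assume m: "m \<in> {1..N}"
  show "onb m \<in> ranH u" unfolding onb_def g_comb comb_scale by (rule comb_ran)
  have "Kop u (onb m) = (\<lambda>n. (cnj (\<tau> m) * \<kappa> m) * g m n)"
    unfolding onb_def by (simp add: Kop_scale g_l2 Kg[OF m] mult.assoc)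
  also have "\<dots> = (\<lambda>n. of_real (mu m) * onb m n)" by (simp add: kappa_tau[OF m] onb_def mult.assoc)
  finally show "Kop u (onb m) = (\<lambda>n. of_real (mu m) * onb m n)" .
next
  fix m k assume m: "m \<in> {1..N}" and k: "k \<in> {1..N}"
  have "hinner (onb m) (onb k) = \<tau> m * cnj (\<tau> k) * hinner (g m) (g k)"
    unfolding onb_def by (simp add: hinner_scale_left hinner_scale_right l2_scale g_l2)
  also have "\<dots> = (if m = k then 1 else 0)"
  proof (cases "m = k")
    case True
    have hn: "hnorm (g m) > 0" using hnorm_pos[OF g_l2 g_nz[OF m]] .
    have "\<tau> m * cnj (\<tau> m) = 1 / of_real ((hnorm (g m))^2)"
      unfolding \<tau>_def using hn by (simp add: cis_cnj cis_mult power2_eq_square)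
    thus ?thesis using True hn by (simp add: hinner_self g_l2)
  next
    case False thus ?thesis using g_orth m k by simp
  qed
  finally show "hinner (onb m) (onb k) = (if m = k then 1 else 0)" .
next
  fix h assume h: "h \<in> ranH u"
  obtain c where c: "h = (\<lambda>n. \<Sum>m=1..N. c m * g m n)" using g_span[OF h] by blast
  have "h = (\<lambda>n. \<Sum>m=1..N. (c m / \<tau> m) * onb m n)"
    unfolding c onb_def by (intro ext sum.cong refl) (simp add: tau_nz)
  thus "\<exists>c. h = (\<lambda>n. \<Sum>m=1..N. c m * onb m n)" by (intro exI[of _ "\<lambda>m. c m / \<tau> m"])
qed

text \<open>Conversely, for any such orthonormal eigenbasis (f_m), f_m = t g_m with
  (u|f_m) = conj t, which determines the phase of kappa_m through theta_m = arg (u|f_m)^2.\<close>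

lemma K_onb_phase:
  assumes f: "K_onb N u mu f" and m: "m \<in> {1..N}"
  shows "\<exists>t. t \<noteq> 0 \<and> hinner u (f m) = cnj t \<and> \<kappa> m = of_real (mu m) * t / cnj t"
proof -
  have fr: "f m \<in> ranH u" and Kf: "Kop u (f m) = (\<lambda>n. of_real (mu m) * f m n)"
    and nf: "hinner (f m) (f m) = 1" using f m unfolding K_onb_def by auto
  have fl: "l2 (f m)" using ran_l2[OF fr] .
  have "Kop u (Kop u (f m)) = (\<lambda>n. of_real (mu m) * (of_real (mu m) * f m n))"
    by (simp add: Kf Kop_scale fl)
  also have "\<dots> = (\<lambda>n. of_real (sig m) * f m n)"
  proof -
    have e: "complex_of_real (mu m) * complex_of_real (mu m) = of_real (sig m)"
      by (metis mu_sq[OF m] of_real_mult power2_eq_square)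
    show ?thesis by (simp add: mult.assoc[symmetric] e)
  qed
  finally obtain t where t: "f m = (\<lambda>n. t * g m n)" using g_simple[OF m fr] by blast
  have t0: "t \<noteq> 0" using nf t by auto
  have "hinner u (f m) = cnj t * hinner u (g m)" by (simp add: t hinner_scale_right g_l2 l2_u)
  hence hu: "hinner u (f m) = cnj t" by (simp add: hinner_u_g[OF m])
  have "(\<lambda>n. (cnj t * \<kappa> m) * g m n) = Kop u (f m)" by (simp add: t Kop_scale g_l2 Kg[OF m] mult.assoc)
  also have "\<dots> = (\<lambda>n. of_real (mu m) * f m n)" by (rule Kf)
  also have "\<dots> = (\<lambda>n. (of_real (mu m) * t) * g m n)" by (simp add: t mult.assoc)
  finally have "cnj t * \<kappa> m = of_real (mu m) * t" by (rule scal_cancel[OF g_nz[OF m]])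
  hence "\<kappa> m = of_real (mu m) * t / cnj t" using t0 by (simp add: field_simps)
  thus ?thesis using t0 hu by blast
qed

text \<open>Since H_u^2 T_z g - sig_m T_z g = (u|K_u g) 1 for an eigenvector g of K_u^2,
  applying P_u (which commutes with H_u^2) gives S g_m = conj(kappa_m) (H_u^2 - sig_m)^{-1} P_u 1.\<close>

lemma HHT_eq:
  assumes gl: "l2 y" and eq: "Kop u (Kop u y) = (\<lambda>n. of_real s * y n)"
  shows "(\<lambda>n. H (H (shiftz y)) n - of_real s * shiftz y n) = (\<lambda>n. hinner u (Kop u y) * one_h n)"
proof
  fix n show "H (H (shiftz y)) n - of_real s * shiftz y n = hinner u (Kop u y) * one_h n"
  proof (cases n)
    case 0
    thus ?thesis by (simp add: hankel_0 Kop_def shiftz_def one_h_def)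
  next
    case (Suc k)
    have "H (H (shiftz y)) (Suc k) = of_real s * y k" using HHT[OF gl, of k] eq by simp
    thus ?thesis using Suc by (simp add: shiftz_def one_h_def)
  qed
qed

lemma Sop_g: "m \<in> {1..N} \<Longrightarrow> Sop u (g m) = (\<lambda>n. cnj (\<kappa> m) * resolv u (sig m) (Pu u one_h) n)"
proof -
  assume m: "m \<in> {1..N}"
  define T where "T = shiftz (g m)"
  have Tl: "l2 T" unfolding T_def by (rule l2_shiftz[OF g_l2])
  have c: "hinner u (Kop u (g m)) = cnj (\<kappa> m)"
    by (simp add: Kg[OF m] hinner_scale_right g_l2 l2_u hinner_u_g[OF m])
  have eqT: "(\<lambda>n. H (H T) n - of_real (sig m) * T n) = (\<lambda>n. cnj (\<kappa> m) * one_h n)"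
    unfolding T_def using HHT_eq[OF g_l2 g_eig[OF m]] c by simp
  have "(\<lambda>n. H (H (Pv T)) n - of_real (sig m) * Pv T n) = Pv (\<lambda>n. H (H T) n - of_real (sig m) * T n)"
    by (simp add: Pv_lin Pv_HH Tl hankel_l2)
  also have "\<dots> = (\<lambda>n. cnj (\<kappa> m) * Pv one_h n)" by (simp add: eqT Pv_scale l2_one)
  also have "\<dots> = comb (\<lambda>i. cnj (\<kappa> m) * b i)" by (simp add: Pv_one comb_scale)
  finally have "resolv u (sig m) (comb (\<lambda>i. cnj (\<kappa> m) * b i)) = Pv T"
    by (intro resolv_unique[OF sig_pos[OF m] sig_notL[OF m] Pv_l2])
  moreover have "resolv u (sig m) (comb (\<lambda>i. cnj (\<kappa> m) * b i)) = resolv_comb (sig m) (\<lambda>i. cnj (\<kappa> m) * b i)"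
    by (rule resolv_eq_comb[OF sig_pos[OF m] sig_notL[OF m]])
  moreover have "resolv u (sig m) (Pu u one_h) = resolv_comb (sig m) b"
    using resolv_eq_comb[OF sig_pos[OF m] sig_notL[OF m], of b] by (simp add: Pu_eq l2_one Pv_one)
  moreover have "resolv_comb (sig m) (\<lambda>i. cnj (\<kappa> m) * b i) = (\<lambda>n. cnj (\<kappa> m) * resolv_comb (sig m) b n)"
    by (simp add: resolv_comb_def comb_scale)
  moreover have "Sop u (g m) = Pv T"
  proof -
    have "Sop u (g m) = Pu u T" by (simp add: Sop_def T_def)
    also have "\<dots> = Pv T" by (rule Pu_eq[OF Tl])
    finally show ?thesis .
  qed
  ultimately show ?thesis by simp
qed

lemma resolv_mu: "m \<in> {1..N} \<Longrightarrow> resolv u ((mu m)^2) u = g m"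
  using resolv_g mu_sq by simp

lemma sum_nu_eq_Fs: "(\<Sum>j=1..N. (lam j)^2 * (nu u lam j)^2 / ((lam j)^2 - s)) = Fs s"
  unfolding Fs_def' by (intro sum.cong refl) (simp add: nu_eq weight_def L_def)

lemma K2_kernel_trivial: "\<forall>h\<in>ranH u. Kop u (Kop u h) = (\<lambda>n. 0) \<longrightarrow> h = (\<lambda>n. 0)"
  using kernel by blast

lemma mu_below_lam: "\<forall>m\<in>{1..N}. mu m > 0 \<and> (lam m)^2 > (mu m)^2"
proof
  fix m assume m: "m \<in> {1..N}"
  show "mu m > 0 \<and> (lam m)^2 > (mu m)^2" using mu_pos[OF m] sig_lt[OF m] by (simp add: mu_sq[OF m] L_def)
qed

lemma mu_above_next_lam: "\<forall>m\<in>{1..<N}. (mu m)^2 > (lam (Suc m))^2"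
proof
  fix m assume m: "m \<in> {1..<N}"
  hence "m \<in> {1..N}" by auto
  thus "(mu m)^2 > (lam (Suc m))^2" using sig_gt[OF m] by (simp add: mu_sq L_def)
qed

lemma mu_secular_roots:
  "{s::real. (\<forall>j\<in>{1..N}. s \<noteq> (lam j)^2) \<and>
      (\<Sum>j=1..N. (lam j)^2 * (nu u lam j)^2 / ((lam j)^2 - s)) = 1} = (\<lambda>m. (mu m)^2) ` {1..N}"
proof -
  have "(\<lambda>m. (mu m)^2) ` {1..N} = sig ` {1..N}" by (rule image_cong) (simp_all add: mu_sq)
  thus ?thesis unfolding sum_nu_eq_Fs sig_set[symmetric] by (simp add: L_def)
qed

lemma K2_spectrum:
  "{\<sigma>::complex. \<exists>h\<in>ranH u. h \<noteq> (\<lambda>n. 0) \<and> Kop u (Kop u h) = (\<lambda>n. \<sigma> * h n)}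
     = (\<lambda>m. complex_of_real ((mu m)^2)) ` {1..N}"
  unfolding eigset by (rule image_cong) (simp_all add: mu_sq)

lemma K2_eigenvectors:
  "\<forall>m\<in>{1..N}.
     resolv u ((mu m)^2) u \<in> ranH u \<and>
     resolv u ((mu m)^2) u \<noteq> (\<lambda>n. 0) \<and>
     Kop u (Kop u (resolv u ((mu m)^2) u)) = (\<lambda>n. of_real ((mu m)^2) * resolv u ((mu m)^2) u n) \<and>
     (\<forall>h\<in>ranH u. Kop u (Kop u h) = (\<lambda>n. of_real ((mu m)^2) * h n)
         \<longrightarrow> (\<exists>c. h = (\<lambda>n. c * resolv u ((mu m)^2) u n))) \<and>
     hinner u (resolv u ((mu m)^2) u) = 1"
  using g_ran g_nz g_eig g_simple hinner_u_g by (simp add: mu_sq resolv_g)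

lemma K2_eigenvectors_orth:
  "\<forall>m\<in>{1..N}. \<forall>k\<in>{1..N}. m \<noteq> k \<longrightarrow>
     hinner (resolv u ((mu m)^2) u) (resolv u ((mu k)^2) u) = 0"
  by (simp add: resolv_mu g_orth)

lemma K2_eigenvectors_span:
  "\<forall>h\<in>ranH u. \<exists>c. h = (\<lambda>n. \<Sum>m=1..N. c m * resolv u ((mu m)^2) u n)"
proof
  fix h assume "h \<in> ranH u"
  then obtain c where c: "h = (\<lambda>n. \<Sum>m=1..N. c m * g m n)" using g_span by blast
  have "h = (\<lambda>n. \<Sum>m=1..N. c m * resolv u ((mu m)^2) u n)"
    unfolding c by (intro ext sum.cong refl) (simp add: resolv_mu)
  thus "\<exists>c. h = (\<lambda>n. \<Sum>m=1..N. c m * resolv u ((mu m)^2) u n)" by blast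
qed

lemma K_and_S_on_eigenvectors:
  "\<forall>f. K_onb N u mu f \<longrightarrow> (\<forall>m\<in>{1..N}.
     Kop u (resolv u ((mu m)^2) u)
       = (\<lambda>n. of_real (mu m) * exp (- (\<i> * of_real (Arg ((hinner u (f m))^2))))
                * resolv u ((mu m)^2) u n) \<and>
     Sop u (resolv u ((mu m)^2) u)
       = (\<lambda>n. of_real (mu m) * exp (\<i> * of_real (Arg ((hinner u (f m))^2)))
                * resolv u ((mu m)^2) (Pu u one_h) n))"
proof (intro allI impI ballI conjI)
  fix f m assume f: "K_onb N u mu f" and m: "m \<in> {1..N}"
  obtain t where t: "t \<noteq> 0" "hinner u (f m) = cnj t" "\<kappa> m = of_real (mu m) * t / cnj t"
    using K_onb_phase[OF f m] by blast
  have ck: "cnj (\<kappa> m) = of_real (mu m) * (cnj t / t)" using t(3) by simp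
  show "Kop u (resolv u ((mu m)^2) u)
      = (\<lambda>n. of_real (mu m) * exp (- (\<i> * of_real (Arg ((hinner u (f m))^2)))) * resolv u ((mu m)^2) u n)"
    unfolding resolv_mu[OF m] t(2) exp_arg(2)[OF t(1)] Kg[OF m] t(3) by (simp add: mult.assoc)
  show "Sop u (resolv u ((mu m)^2) u)
      = (\<lambda>n. of_real (mu m) * exp (\<i> * of_real (Arg ((hinner u (f m))^2))) * resolv u ((mu m)^2) (Pu u one_h) n)"
    unfolding mu_sq[OF m] resolv_g[OF m] t(2) exp_arg(1)[OF t(1)] Sop_g[OF m] ck ..
qed

end

theorem lemma2:
  fixes N :: nat and u :: "nat \<Rightarrow> complex" and lam :: "nat \<Rightarrow> real"
  assumes gen: "in_Mgen N u"
    and lam_pos: "\<forall>j\<in>{1..N}. lam j > 0"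
    and lam_dec: "\<forall>j\<in>{1..<N}. lam (Suc j) < lam j"
    and lam_eig: "{s::real. s > 0 \<and> (\<exists>h\<in>H2. h \<noteq> (\<lambda>n. 0) \<and> hankel u (hankel u h) = (\<lambda>n. of_real s * h n))}
                  = (\<lambda>j. (lam j)^2) ` {1..N}"
  shows "(\<forall>h\<in>ranH u. Kop u (Kop u h) = (\<lambda>n. 0) \<longrightarrow> h = (\<lambda>n. 0)) \<and>
    (\<exists>mu :: nat \<Rightarrow> real.
       (\<forall>m\<in>{1..N}. mu m > 0 \<and> (lam m)^2 > (mu m)^2) \<and>
       (\<forall>m\<in>{1..<N}. (mu m)^2 > (lam (Suc m))^2) \<and>
       {s::real. (\<forall>j\<in>{1..N}. s \<noteq> (lam j)^2) \<and>
          (\<Sum>j=1..N. (lam j)^2 * (nu u lam j)^2 / ((lam j)^2 - s)) = 1}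
         = (\<lambda>m. (mu m)^2) ` {1..N} \<and>
       {\<sigma>::complex. \<exists>h\<in>ranH u. h \<noteq> (\<lambda>n. 0) \<and> Kop u (Kop u h) = (\<lambda>n. \<sigma> * h n)}
         = (\<lambda>m. complex_of_real ((mu m)^2)) ` {1..N} \<and>
       (\<forall>m\<in>{1..N}.
          resolv u ((mu m)^2) u \<in> ranH u \<and>
          resolv u ((mu m)^2) u \<noteq> (\<lambda>n. 0) \<and>
          Kop u (Kop u (resolv u ((mu m)^2) u)) = (\<lambda>n. of_real ((mu m)^2) * resolv u ((mu m)^2) u n) \<and>
          (\<forall>h\<in>ranH u. Kop u (Kop u h) = (\<lambda>n. of_real ((mu m)^2) * h n)
              \<longrightarrow> (\<exists>c. h = (\<lambda>n. c * resolv u ((mu m)^2) u n))) \<and>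
          hinner u (resolv u ((mu m)^2) u) = 1) \<and>
       (\<forall>m\<in>{1..N}. \<forall>k\<in>{1..N}. m \<noteq> k \<longrightarrow>
          hinner (resolv u ((mu m)^2) u) (resolv u ((mu k)^2) u) = 0) \<and>
       (\<forall>h\<in>ranH u. \<exists>c. h = (\<lambda>n. \<Sum>m=1..N. c m * resolv u ((mu m)^2) u n)) \<and>
       (\<exists>f. K_onb N u mu f) \<and>
       (\<forall>f. K_onb N u mu f \<longrightarrow> (\<forall>m\<in>{1..N}.
          Kop u (resolv u ((mu m)^2) u)
            = (\<lambda>n. of_real (mu m) * exp (- (\<i> * of_real (Arg ((hinner u (f m))^2))))
                     * resolv u ((mu m)^2) u n) \<and>
          Sop u (resolv u ((mu m)^2) u)
            = (\<lambda>n. of_real (mu m) * exp (\<i> * of_real (Arg ((hinner u (f m))^2)))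
                     * resolv u ((mu m)^2) (Pu u one_h) n))))"
proof -
  from gen have M: "in_M N u" and not1: "one_h \<notin> ranH u"
    and indep: "\<forall>c :: nat \<Rightarrow> complex. (\<lambda>n. \<Sum>k=1..N. c k * H2pow u k one_h n) = (\<lambda>n. 0)
        \<longrightarrow> (\<forall>k\<in>{1..N}. c k = 0)"
    unfolding in_Mgen_def by auto
  from M obtain A B :: "complex poly" where N1: "N \<ge> 1" and AB: "degree A \<le> N - 1" "degree B \<le> N"
      "poly B 0 = 1" "\<forall>z. cmod z \<le> 1 \<longrightarrow> poly B z \<noteq> 0" "fps_of_poly B * Abs_fps u = fps_of_poly A"
    unfolding in_M_def by blast
  interpret spectral_setting N u A B lam
    by unfold_locales (fact N1 AB lam_pos lam_dec lam_eig not1 indep)+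
  show ?thesis
    using K2_kernel_trivial mu_below_lam mu_above_next_lam mu_secular_roots K2_spectrum K2_eigenvectors
      K2_eigenvectors_orth K2_eigenvectors_span onb_is_K_onb K_and_S_on_eigenvectors
    by blast
qed

end
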